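(* Let $Y$ be a (discrete) groupoid and $\Lambda\subseteq Y$ a subcategory with $Y^0\subseteq\Lambda$. For $t\in Y$, $W_t\in\mathcal W_0$ if and only if there is a finite set $F\subseteq\mathcal Z_\Lambda$ such that (1) for every $\zeta\in F$, $\varphi_\zeta(\beta)=t\beta$ for all $\beta\in A(\zeta)$; and (2) $\{\beta\in\Lambda: r(\beta)=s(t),\ t\beta\in\Lambda\}=\bigcup_{\zeta\in F}A(\zeta)$.
   Context: $\Lambda$ is a left cancellative small category (being a subcategory of a groupoid), composition $\alpha\beta$ defined when $s(\alpha)=r(\beta)$. On $\ell^2(\Lambda)$ with standard basis $\{e_\alpha\}$, for $t\in Y$ let $W_t e_\alpha=e_{t\alpha}$ if $s(t)=r(\alpha)$ and $t\alpha\in\Lambda$, and $W_te_\alpha=0$ otherwise (so $W_t=J^*L_tJ$ with $L$ the left regular representation of $Y$ and $J:\ell^2(\Lambda)\to\ell^2(Y)$ the inclusion). $\mathcal W_0$ is the C*-algebra generated by $\{W_\alpha:\alpha\in\Lambda\}$. For $\alpha\in\Lambda$, $\tau^\alpha(\beta)=\alpha\beta$ on $\{\beta\in\Lambda:r(\beta)=s(\alpha)\}$ and $\sigma^\alpha$ is its inverse on $\alpha\Lambda$. A zigzag is $\zeta=(\alpha_1,\beta_1,\dots,\alpha_n,\beta_n)$, $\alpha_i,\beta_i\in\Lambda$, with $r(\alpha_i)=r(\beta_i)$ and $s(\alpha_{i+1})=s(\beta_i)$; $\mathcal Z_\Lambda$ the set of zigzags; $\varphi_\zeta=\sigma^{\alpha_1}\circ\tau^{\beta_1}\circ\cdots\circ\sigma^{\alpha_n}\circ\tau^{\beta_n}$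 (composition of partial maps) with domain $A(\zeta)$. *)

theory Defs
  imports "HOL-Analysis.Analysis"
begin

text \<open>A (discrete) groupoid on the set Y of arrows (in an ambient type 'a):
  range/source maps r, s, a total multiplication function m (only meaningful on
  composable pairs, i.e. s x = r y), and inversion i. The unit space is r ` Y.\<close>

definition groupoid ::
  "'a set \<Rightarrow> ('a \<Rightarrow> 'a) \<Rightarrow> ('a \<Rightarrow> 'a) \<Rightarrow> ('a \<Rightarrow> 'a \<Rightarrow> 'a) \<Rightarrow> ('a \<Rightarrow> 'a) \<Rightarrow> bool" where
  "groupoid Y r s m i \<longleftrightarrow>
     (\<forall>x\<in>Y. r x \<in> Y \<and> s x \<in> Y \<and> r (r x) = r x \<and> s (r x) = r x
            \<and> r (s x) = s x \<and> s (s x) = s x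
            \<and> m (r x) x = x \<and> m x (s x) = x
            \<and> i x \<in> Y \<and> r (i x) = s x \<and> s (i x) = r x
            \<and> m x (i x) = r x \<and> m (i x) x = s x) \<and>
     (\<forall>x\<in>Y. \<forall>y\<in>Y. s x = r y \<longrightarrow> m x y \<in> Y \<and> r (m x y) = r x \<and> s (m x y) = s y) \<and>
     (\<forall>x\<in>Y. \<forall>y\<in>Y. \<forall>z\<in>Y. s x = r y \<longrightarrow> s y = r z \<longrightarrow> m (m x y) z = m x (m y z))"

definition subcategory ::
  "'a set \<Rightarrow> ('a \<Rightarrow> 'a) \<Rightarrow> ('a \<Rightarrow> 'a) \<Rightarrow> ('a \<Rightarrow> 'a \<Rightarrow> 'a) \<Rightarrow> 'a set \<Rightarrow> bool" where
  "subcategory Y r s m \<Lambda> \<longleftrightarrow> \<Lambda> \<subseteq> Y \<and>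
     (\<forall>x\<in>\<Lambda>. r x \<in> \<Lambda> \<and> s x \<in> \<Lambda>) \<and>
     (\<forall>x\<in>\<Lambda>. \<forall>y\<in>\<Lambda>. s x = r y \<longrightarrow> m x y \<in> \<Lambda>)"

definition l2 :: "'a set \<Rightarrow> ('a \<Rightarrow> complex) set" where
  "l2 \<Lambda> = {f. (\<forall>x. x \<notin> \<Lambda> \<longrightarrow> f x = 0) \<and> (\<lambda>x. (cmod (f x))\<^sup>2) summable_on UNIV}"

definition l2inner :: "('a \<Rightarrow> complex) \<Rightarrow> ('a \<Rightarrow> complex) \<Rightarrow> complex" where
  "l2inner f g = (\<Sum>\<^sub>\<infinity>x. cnj (f x) * g x)"

definition l2norm :: "('a \<Rightarrow> complex) \<Rightarrow> real" where
  "l2norm f = sqrt (\<Sum>\<^sub>\<infinity>x. (cmod (f x))\<^sup>2)"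

type_synonym 'a op = "('a \<Rightarrow> complex) \<Rightarrow> ('a \<Rightarrow> complex)"

text \<open>W_t = J^* L_t J: (W_t f)(g) = f(t^{-1} g) if g in Lambda, r g = r t and t^{-1} g in Lambda,
  and 0 otherwise; on basis vectors W_t e_a = e_{t a} if s t = r a and t a in Lambda, else 0.\<close>

definition Wop :: "('a \<Rightarrow> 'a) \<Rightarrow> ('a \<Rightarrow> 'a \<Rightarrow> 'a) \<Rightarrow> ('a \<Rightarrow> 'a) \<Rightarrow> 'a set \<Rightarrow> 'a \<Rightarrow> 'a op" where
  "Wop r m i \<Lambda> t f = (\<lambda>g. if g \<in> \<Lambda> \<and> r g = r t \<and> m (i t) g \<in> \<Lambda> then f (m (i t) g) else 0)"

text \<open>The C*-algebra generated by a set G of operators on l2(Lambda): the smallest set of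
  operators containing G and closed under sums, scalar multiples, products, adjoints and
  operator-norm limits (operators being identified when they agree on l2(Lambda)).\<close>

inductive_set Cstar_gen :: "'a set \<Rightarrow> 'a op set \<Rightarrow> 'a op set" for \<Lambda> G where
  gen: "T \<in> G \<Longrightarrow> T \<in> Cstar_gen \<Lambda> G"
| add: "T \<in> Cstar_gen \<Lambda> G \<Longrightarrow> U \<in> Cstar_gen \<Lambda> G \<Longrightarrow> (\<lambda>f x. T f x + U f x) \<in> Cstar_gen \<Lambda> G"
| scale: "T \<in> Cstar_gen \<Lambda> G \<Longrightarrow> (\<lambda>f x. c * T f x) \<in> Cstar_gen \<Lambda> G"
| mult: "T \<in> Cstar_gen \<Lambda> G \<Longrightarrow> U \<in> Cstar_gen \<Lambda> G \<Longrightarrow> (\<lambda>f. T (U f)) \<in> Cstar_gen \<Lambda> G"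
| adj: "T \<in> Cstar_gen \<Lambda> G \<Longrightarrow> (\<forall>g\<in>l2 \<Lambda>. T' g \<in> l2 \<Lambda>) \<Longrightarrow>
         (\<forall>f\<in>l2 \<Lambda>. \<forall>g\<in>l2 \<Lambda>. l2inner (T f) g = l2inner f (T' g)) \<Longrightarrow> T' \<in> Cstar_gen \<Lambda> G"
| lim: "(\<And>n::nat. Ts n \<in> Cstar_gen \<Lambda> G) \<Longrightarrow> (\<forall>f\<in>l2 \<Lambda>. T f \<in> l2 \<Lambda>) \<Longrightarrow>
         (\<forall>\<epsilon>>0. \<exists>N. \<forall>n\<ge>N. \<forall>f\<in>l2 \<Lambda>. l2norm (\<lambda>x. Ts n f x - T f x) \<le> \<epsilon> * l2norm f) \<Longrightarrow>
         T \<in> Cstar_gen \<Lambda> G"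

definition W0 :: "('a \<Rightarrow> 'a) \<Rightarrow> ('a \<Rightarrow> 'a \<Rightarrow> 'a) \<Rightarrow> ('a \<Rightarrow> 'a) \<Rightarrow> 'a set \<Rightarrow> 'a op set" where
  "W0 r m i \<Lambda> = Cstar_gen \<Lambda> (Wop r m i \<Lambda> ` \<Lambda>)"

definition tau :: "('a \<Rightarrow> 'a) \<Rightarrow> ('a \<Rightarrow> 'a) \<Rightarrow> ('a \<Rightarrow> 'a \<Rightarrow> 'a) \<Rightarrow> 'a set \<Rightarrow> 'a \<Rightarrow> 'a \<Rightarrow> 'a option" where
  "tau r s m \<Lambda> b c = (if c \<in> \<Lambda> \<and> r c = s b then Some (m b c) else None)"

definition sigma :: "('a \<Rightarrow> 'a) \<Rightarrow> ('a \<Rightarrow> 'a) \<Rightarrow> ('a \<Rightarrow> 'a \<Rightarrow> 'a) \<Rightarrow> 'a set \<Rightarrow> 'a \<Rightarrow> 'a \<Rightarrow> 'a option" where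
  "sigma r s m \<Lambda> a y = (if \<exists>c\<in>\<Lambda>. r c = s a \<and> m a c = y
      then Some (THE c. c \<in> \<Lambda> \<and> r c = s a \<and> m a c = y) else None)"

text \<open>A zigzag (a1,b1,...,an,bn), n >= 1, is the list [(a1,b1),...,(an,bn)].\<close>
definition zigzags :: "('a \<Rightarrow> 'a) \<Rightarrow> ('a \<Rightarrow> 'a) \<Rightarrow> 'a set \<Rightarrow> ('a \<times> 'a) list set" where
  "zigzags r s \<Lambda> = {z. z \<noteq> [] \<and> (\<forall>k<length z. fst (z!k) \<in> \<Lambda> \<and> snd (z!k) \<in> \<Lambda>
        \<and> r (fst (z!k)) = r (snd (z!k))
        \<and> (Suc k < length z \<longrightarrow> s (fst (z!Suc k)) = s (snd (z!k))))}"

text \<open>phi_z = sigma^{a1} o tau^{b1} o ... o sigma^{an} o tau^{bn} (partial maps).\<close>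
fun zzmap :: "('a \<Rightarrow> 'a) \<Rightarrow> ('a \<Rightarrow> 'a) \<Rightarrow> ('a \<Rightarrow> 'a \<Rightarrow> 'a) \<Rightarrow> 'a set \<Rightarrow> ('a \<times> 'a) list \<Rightarrow> 'a \<Rightarrow> 'a option" where
  "zzmap r s m \<Lambda> [] x = Some x"
| "zzmap r s m \<Lambda> ((a, b) # z) x =
     Option.bind (zzmap r s m \<Lambda> z x) (\<lambda>y. Option.bind (tau r s m \<Lambda> b y) (sigma r s m \<Lambda> a))"

definition zzdom :: "('a \<Rightarrow> 'a) \<Rightarrow> ('a \<Rightarrow> 'a) \<Rightarrow> ('a \<Rightarrow> 'a \<Rightarrow> 'a) \<Rightarrow> 'a set \<Rightarrow> ('a \<times> 'a) list \<Rightarrow> 'a set" where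
  "zzdom r s m \<Lambda> z = {x. zzmap r s m \<Lambda> z x \<noteq> None}"

end

theory Submission
  imports Defs
begin

text \<open>
  Write V_\<zeta> f = f \<circ> \<phi>_\<zeta> (zero off A(\<zeta>)) for the operator of a zigzag
  on l2(\<Lambda>). Every V_\<zeta> lies in W0, its adjoint is the operator of the reversed zigzag, and products
  concatenate zigzags; hence every operator of W0 is a norm limit of finite linear combinations
  of zigzag operators, because these limits contain the generators and are closed under the
  C*-operations.

  If W_t is such a limit, approximate it within 1/2 and evaluate at t\<beta> on the basis vector at
  \<beta>: some \<zeta> in the combination must satisfy \<phi>_\<zeta>(t\<beta>) = \<beta>. Since \<phi>_\<zeta> is always the
  restriction of a left translation of the groupoid, the reversed zigzags act as left
  multiplication by t on their whole domains, and they cover {\<beta>. t\<beta> \<in> \<Lambda>}.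

  Conversely, for such a zigzag V_\<zeta>^* is W_t cut down to A(\<zeta>), and the cut-downs of W_t to
  finite unions of domains are obtained inside W0 by inclusion-exclusion.
\<close>

section \<open>The Hilbert space l2(\<Lambda>)\<close>

lemma l2D: "f \<in> l2 \<Lambda> \<Longrightarrow> (\<lambda>x. (cmod (f x))\<^sup>2) summable_on UNIV"
  "f \<in> l2 \<Lambda> \<Longrightarrow> x \<notin> \<Lambda> \<Longrightarrow> f x = 0"
  by (auto simp: l2_def)

lemma l2norm_nonneg: "l2norm f \<ge> 0"
  unfolding l2norm_def by (simp add: infsum_nonneg)

lemma l2norm_power2: "(l2norm f)\<^sup>2 = (\<Sum>\<^sub>\<infinity>x. (cmod (f x))\<^sup>2)"
  unfolding l2norm_def by (simp add: infsum_nonneg)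

lemma sum_power2_le_l2norm:
  assumes "f \<in> l2 \<Lambda>" "finite F"
  shows "(\<Sum>x\<in>F. (cmod (f x))\<^sup>2) \<le> (l2norm f)\<^sup>2"
proof -
  have "(\<Sum>x\<in>F. (cmod (f x))\<^sup>2)
    = (\<Sum>\<^sub>\<infinity>x\<in>F. (cmod (f x))\<^sup>2)" using assms by simp
  also have "\<dots> \<le> (\<Sum>\<^sub>\<infinity>x. (cmod (f x))\<^sup>2)"
    by (rule infsum_mono_neutral) (use assms l2D in auto)
  finally show ?thesis by (simp add: l2norm_power2)
qed

lemma L2_set_le_l2norm:
  assumes "f \<in> l2 \<Lambda>"
  shows "L2_set (\<lambda>x. cmod (f x)) F \<le> l2norm f"
proof (cases "finite F")
  case True
  have "L2_set (\<lambda>x. cmod (f x)) F = sqrt (\<Sum>x\<in>F. (cmod (f x))\<^sup>2)"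
    by (simp add: L2_set_def)
  also have "\<dots> \<le> sqrt ((l2norm f)\<^sup>2)"
    by (rule real_sqrt_le_mono[OF sum_power2_le_l2norm[OF assms True]])
  also have "\<dots> = l2norm f" by (simp add: abs_of_nonneg l2norm_nonneg)
  finally show ?thesis .
qed (simp add: l2norm_nonneg)

lemma l2_bounded:
  assumes "\<And>x. x \<notin> \<Lambda> \<Longrightarrow> f x = 0"
    and "\<And>F. finite F \<Longrightarrow> L2_set (\<lambda>x. cmod (f x)) F \<le> B"
  shows "f \<in> l2 \<Lambda>" "l2norm f \<le> B"
proof -
  have B0: "0 \<le> B" using assms(2)[of "{}"] by simp
  have fs: "\<And>F. finite F \<Longrightarrow> (\<Sum>x\<in>F. (cmod (f x))\<^sup>2) \<le> B\<^sup>2"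
  proof -
    fix F :: "'a set" assume "finite F"
    have "sqrt (\<Sum>x\<in>F. (cmod (f x))\<^sup>2) \<le> B"
      using assms(2)[OF \<open>finite F\<close>] by (simp add: L2_set_def)
    thus "(\<Sum>x\<in>F. (cmod (f x))\<^sup>2) \<le> B\<^sup>2"
      by (rule sqrt_le_D)
  qed
  have sm: "(\<lambda>x. (cmod (f x))\<^sup>2) summable_on UNIV"
    by (rule nonneg_bdd_above_summable_on) (use fs in \<open>auto simp: bdd_above_def\<close>)
  thus "f \<in> l2 \<Lambda>" using assms(1) by (auto simp: l2_def)
  have "(\<Sum>\<^sub>\<infinity>x. (cmod (f x))\<^sup>2) \<le> B\<^sup>2"
    by (rule infsum_le_finite_sums[OF sm]) (use fs in auto)
  then have "sqrt (\<Sum>\<^sub>\<infinity>x. (cmod (f x))\<^sup>2) \<le> sqrt (B\<^sup>2)"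
    by (rule real_sqrt_le_mono)
  thus "l2norm f \<le> B" using B0 by (simp add: l2norm_def abs_of_nonneg)
qed

lemma l2_add:
  assumes "f \<in> l2 \<Lambda>" "g \<in> l2 \<Lambda>"
  shows "(\<lambda>x. f x + g x) \<in> l2 \<Lambda>"
    "l2norm (\<lambda>x. f x + g x) \<le> l2norm f + l2norm g"
proof -
  have *: "L2_set (\<lambda>x. cmod (f x + g x)) F \<le> l2norm f + l2norm g" if "finite F" for F
  proof -
    have "L2_set (\<lambda>x. cmod (f x + g x)) F \<le> L2_set (\<lambda>x. cmod (f x) + cmod (g x)) F"
      by (rule L2_set_mono) (auto simp: norm_triangle_ineq)
    also have "\<dots> \<le> L2_set (\<lambda>x. cmod (f x)) F + L2_set (\<lambda>x. cmod (g x)) F"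
      by (rule L2_set_triangle_ineq)
    also have "\<dots> \<le> l2norm f + l2norm g" using L2_set_le_l2norm assms by (metis add_mono)
    finally show ?thesis .
  qed
  have z: "\<And>x. x \<notin> \<Lambda> \<Longrightarrow> f x + g x = 0"
    by (simp add: l2D(2)[OF assms(1)] l2D(2)[OF assms(2)])
  show "(\<lambda>x. f x + g x) \<in> l2 \<Lambda>" "l2norm (\<lambda>x. f x + g x) \<le> l2norm f + l2norm g"
    using l2_bounded[of \<Lambda> "\<lambda>x. f x + g x", OF z *] by auto
qed

lemma l2_scale:
  assumes "f \<in> l2 \<Lambda>"
  shows "(\<lambda>x. c * f x) \<in> l2 \<Lambda>" "l2norm (\<lambda>x. c * f x) = cmod c * l2norm f"
proof -
  have e: "(\<lambda>x. (cmod (c * f x))\<^sup>2) = (\<lambda>x. (cmod (f x))\<^sup>2 * (cmod c)\<^sup>2)"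
    by (auto simp: norm_mult power_mult_distrib)
  have "(\<lambda>x. (cmod (f x))\<^sup>2 * (cmod c)\<^sup>2) summable_on UNIV"
    by (rule summable_on_cmult_left) (rule l2D(1)[OF assms])
  then show "(\<lambda>x. c * f x) \<in> l2 \<Lambda>" using assms unfolding l2_def by (simp add: e)
  have "(\<Sum>\<^sub>\<infinity>x. (cmod (c * f x))\<^sup>2)
    = (\<Sum>\<^sub>\<infinity>x. (cmod (f x))\<^sup>2) * (cmod c)\<^sup>2"
    unfolding e by (rule infsum_cmult_left) (use assms l2D in auto)
  thus "l2norm (\<lambda>x. c * f x) = cmod c * l2norm f"
    unfolding l2norm_def by (simp add: real_sqrt_mult)
qed

lemma l2_diff:
  assumes "f \<in> l2 \<Lambda>" "g \<in> l2 \<Lambda>"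
  shows "(\<lambda>x. f x - g x) \<in> l2 \<Lambda>"
    "l2norm (\<lambda>x. f x - g x) \<le> l2norm f + l2norm g"
proof -
  have e: "(\<lambda>x. f x - g x) = (\<lambda>x. f x + (\<lambda>x. (-1) * g x) x)" by auto
  have g': "(\<lambda>x. (-1) * g x) \<in> l2 \<Lambda>" "l2norm (\<lambda>x. (-1) * g x) = l2norm g"
    using l2_scale[OF assms(2), of "-1"] by auto
  show "(\<lambda>x. f x - g x) \<in> l2 \<Lambda>" "l2norm (\<lambda>x. f x - g x) \<le> l2norm f + l2norm g"
    unfolding e using l2_add[OF assms(1) g'(1)] g'(2) by auto
qed

lemma l2norm_minus_commute: "l2norm (\<lambda>x. f x - g x) = l2norm (\<lambda>x. g x - f x)"
  unfolding l2norm_def by (simp add: norm_minus_commute)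

lemma l2norm_diff_triangle:
  assumes "f \<in> l2 \<Lambda>" "g \<in> l2 \<Lambda>" "h \<in> l2 \<Lambda>"
  shows "l2norm (\<lambda>x. f x - h x) \<le> l2norm (\<lambda>x. f x - g x) + l2norm (\<lambda>x. g x - h x)"
proof -
  have "(\<lambda>x. f x - h x) = (\<lambda>x. (\<lambda>x. f x - g x) x + (\<lambda>x. g x - h x) x)" by auto
  thus ?thesis using l2_add[OF l2_diff(1)[OF assms(1,2)] l2_diff(1)[OF assms(2,3)]] by simp
qed

lemma norm_le_l2norm:
  assumes "f \<in> l2 \<Lambda>" shows "cmod (f x) \<le> l2norm f"
proof -
  have "cmod (f x) = L2_set (\<lambda>x. cmod (f x)) {x}" by (simp add: L2_set_def)
  thus ?thesis using L2_set_le_l2norm[OF assms] by metis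
qed

lemma l2_zero: "(\<lambda>x. 0) \<in> l2 \<Lambda>" "l2norm (\<lambda>x. 0) = 0"
  by (auto simp: l2_def l2norm_def)

definition basis_vec :: "'a \<Rightarrow> 'a \<Rightarrow> complex" where "basis_vec b = (\<lambda>x. if x = b then 1 else 0)"

lemma basis_vec_l2: assumes "b \<in> \<Lambda>" shows "basis_vec b \<in> l2 \<Lambda>"
  "l2norm (basis_vec b) = 1"
proof -
  have *: "L2_set (\<lambda>x. cmod (basis_vec b x)) F \<le> 1" if "finite F" for F
  proof -
    have "L2_set (\<lambda>x. cmod (basis_vec b x)) F
      \<le> (\<Sum>x\<in>F. \<bar>cmod (basis_vec b x)\<bar>)" by (rule L2_set_le_sum_abs)
    also have "\<dots> = (\<Sum>x\<in>F\<inter>{b}. 1)" using that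
      by (intro sum.mono_neutral_cong_right) (auto simp: basis_vec_def)
    also have "\<dots> \<le> 1" by (cases "b \<in> F") auto
    finally show ?thesis .
  qed
  have z: "\<And>x. x \<notin> \<Lambda> \<Longrightarrow> basis_vec b x = 0" using assms
    by (auto simp: basis_vec_def)
  show l: "basis_vec b \<in> l2 \<Lambda>" using l2_bounded[of \<Lambda> "basis_vec b", OF z *] by auto
  have "l2norm (basis_vec b) \<le> 1" using l2_bounded[of \<Lambda> "basis_vec b", OF z *] by auto
  moreover have "cmod (basis_vec b b) \<le> l2norm (basis_vec b)" by (rule norm_le_l2norm[OF l])
  ultimately show "l2norm (basis_vec b) = 1" by (simp add: basis_vec_def)
qed

lemma infsum_diff:
  fixes f g :: "'a \<Rightarrow> 'b::{topological_ab_group_add, t2_space}"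
  assumes "f summable_on A" "g summable_on A"
  shows "infsum (\<lambda>x. f x - g x) A = infsum f A - infsum g A"
proof -
  have "infsum (\<lambda>x. f x + (- g x)) A = infsum f A + infsum (\<lambda>x. - g x) A"
    by (rule infsum_add[OF assms(1)]) (rule summable_on_uminus[THEN iffD2, OF assms(2)])
  thus ?thesis by (simp add: infsum_uminus)
qed

lemma l2inner_abs:
  assumes "f \<in> l2 \<Lambda>" "g \<in> l2 \<Lambda>"
  shows "(\<lambda>x. norm (cnj (f x) * g x)) summable_on UNIV"
    "(\<Sum>\<^sub>\<infinity>x. norm (cnj (f x) * g x)) \<le> l2norm f * l2norm g"
proof -
  have fs: "(\<Sum>x\<in>F. norm (cnj (f x) * g x)) \<le> l2norm f * l2norm g" if "finite F" for F
  proof -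
    have "(\<Sum>x\<in>F. norm (cnj (f x) * g x))
      = (\<Sum>x\<in>F. \<bar>cmod (f x)\<bar> * \<bar>cmod (g x)\<bar>)" by (simp add: norm_mult)
    also have "\<dots> \<le> L2_set (\<lambda>x. cmod (f x)) F * L2_set (\<lambda>x. cmod (g x)) F"
      by (rule L2_set_mult_ineq)
    also have "\<dots> \<le> l2norm f * l2norm g"
      by (intro mult_mono L2_set_le_l2norm[OF assms(1)] L2_set_le_l2norm[OF assms(2)] l2norm_nonneg L2_set_nonneg)
    finally show ?thesis .
  qed
  show sm: "(\<lambda>x. norm (cnj (f x) * g x)) summable_on UNIV"
    by (rule nonneg_bdd_above_summable_on) (use fs in \<open>auto simp: bdd_above_def\<close>)
  show "(\<Sum>\<^sub>\<infinity>x. norm (cnj (f x) * g x)) \<le> l2norm f * l2norm g"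
    by (rule infsum_le_finite_sums[OF sm]) (use fs in auto)
qed

lemma l2inner_summable:
  assumes "f \<in> l2 \<Lambda>" "g \<in> l2 \<Lambda>"
  shows "(\<lambda>x. cnj (f x) * g x) summable_on UNIV"
  by (rule abs_summable_summable[OF l2inner_abs(1)[OF assms]])

lemma l2inner_Cauchy_Schwarz:
  assumes "f \<in> l2 \<Lambda>" "g \<in> l2 \<Lambda>"
  shows "cmod (l2inner f g) \<le> l2norm f * l2norm g"
  unfolding l2inner_def
  by (rule order_trans[OF norm_infsum_bound l2inner_abs(2)[OF assms]]) (rule l2inner_abs(1)[OF assms])

lemma l2inner_diff_right:
  assumes "f \<in> l2 \<Lambda>" "g \<in> l2 \<Lambda>" "h \<in> l2 \<Lambda>"
  shows "l2inner f (\<lambda>x. g x - h x) = l2inner f g - l2inner f h"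
  unfolding l2inner_def
  using infsum_diff[OF l2inner_summable[OF assms(1,2)] l2inner_summable[OF assms(1,3)]]
  by (simp add: right_diff_distrib)

lemma l2inner_diff_left:
  assumes "f \<in> l2 \<Lambda>" "g \<in> l2 \<Lambda>" "h \<in> l2 \<Lambda>"
  shows "l2inner (\<lambda>x. g x - h x) f = l2inner g f - l2inner h f"
  unfolding l2inner_def
  using infsum_diff[OF l2inner_summable[OF assms(2,1)] l2inner_summable[OF assms(3,1)]]
  by (simp add: left_diff_distrib)

lemma l2inner_add_left:
  assumes "f \<in> l2 \<Lambda>" "g \<in> l2 \<Lambda>" "h \<in> l2 \<Lambda>"
  shows "l2inner (\<lambda>x. g x + h x) f = l2inner g f + l2inner h f"
  unfolding l2inner_def
  using infsum_add[OF l2inner_summable[OF assms(2,1)] l2inner_summable[OF assms(3,1)]]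
  by (simp add: distrib_right)

lemma l2inner_add_right:
  assumes "f \<in> l2 \<Lambda>" "g \<in> l2 \<Lambda>" "h \<in> l2 \<Lambda>"
  shows "l2inner f (\<lambda>x. g x + h x) = l2inner f g + l2inner f h"
  unfolding l2inner_def
  using infsum_add[OF l2inner_summable[OF assms(1,2)] l2inner_summable[OF assms(1,3)]]
  by (simp add: distrib_left)

lemma l2inner_scale_left:
  "l2inner (\<lambda>x. c * g x) f = cnj c * l2inner g f"
  unfolding l2inner_def
  using infsum_cmult_right'[of "cnj c" "\<lambda>x. cnj (g x) * f x" UNIV]
  by (simp add: mult.assoc)

lemma l2inner_scale_right:
  "l2inner f (\<lambda>x. c * g x) = c * l2inner f g"
  unfolding l2inner_def
  using infsum_cmult_right'[of c "\<lambda>x. cnj (f x) * g x" UNIV]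
  by (simp add: mult.assoc mult.left_commute)

lemma l2inner_self:
  assumes "f \<in> l2 \<Lambda>"
  shows "l2inner f f = complex_of_real ((l2norm f)\<^sup>2)"
proof -
  have e: "(\<lambda>x. cnj (f x) * f x) = (\<lambda>x. complex_of_real ((cmod (f x))\<^sup>2))"
    by (rule ext, subst complex_norm_square, rule mult.commute)
  have "((\<lambda>x. (cmod (f x))\<^sup>2) has_sum (\<Sum>\<^sub>\<infinity>x. (cmod (f x))\<^sup>2)) UNIV"
    using l2D(1)[OF assms] by (simp add: has_sum_infsum)
  from has_sum_of_real[OF this] have "((\<lambda>x. complex_of_real ((cmod (f x))\<^sup>2)) has_sum complex_of_real (\<Sum>\<^sub>\<infinity>x. (cmod (f x))\<^sup>2)) UNIV" .
  then show ?thesis unfolding l2inner_def e l2norm_power2 by (rule infsumI)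
qed

section \<open>Composition operators of partial injections\<close>

definition pcomp :: "('a \<Rightarrow> 'a option) \<Rightarrow> 'a op" where
  "pcomp \<phi> f x = (case \<phi> x of Some y \<Rightarrow> f y | None \<Rightarrow> 0)"

lemma pcomp_l2:
  assumes inj: "\<And>x x' y. \<phi> x = Some y \<Longrightarrow> \<phi> x' = Some y \<Longrightarrow> x = x'"
    and dom: "\<And>x y. \<phi> x = Some y \<Longrightarrow> x \<in> \<Lambda>"
    and f: "f \<in> l2 \<Lambda>"
  shows "pcomp \<phi> f \<in> l2 \<Lambda>" "l2norm (pcomp \<phi> f) \<le> l2norm f"
proof -
  define D where "D = {x. \<phi> x \<noteq> None}"
  define h where "h x = the (\<phi> x)" for x
  have injh: "inj_on h A" if "A \<subseteq> D" for A
    using that inj unfolding inj_on_def D_def h_def by fastforce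
  have z: "\<And>x. x \<notin> \<Lambda> \<Longrightarrow> pcomp \<phi> f x = 0"
    using dom by (auto simp: pcomp_def split: option.split)
  have *: "L2_set (\<lambda>x. cmod (pcomp \<phi> f x)) F \<le> l2norm f" if "finite F" for F
  proof -
    have "(\<Sum>x\<in>F. (cmod (pcomp \<phi> f x))\<^sup>2)
      = (\<Sum>x\<in>F\<inter>D. (cmod (f (h x)))\<^sup>2)"
      using that by (intro sum.mono_neutral_cong_right) (auto simp: pcomp_def D_def h_def split: option.split)
    also have "\<dots> = (\<Sum>y\<in>h`(F\<inter>D). (cmod (f y))\<^sup>2)"
      using sum.reindex[OF injh[of "F\<inter>D"], of "\<lambda>y. (cmod (f y))\<^sup>2"] by (simp add: o_def)
    also have "\<dots> \<le> (l2norm f)\<^sup>2" by (rule sum_power2_le_l2norm[OF f]) (use that in simp)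
    finally have "sqrt (\<Sum>x\<in>F. (cmod (pcomp \<phi> f x))\<^sup>2)
      \<le> sqrt ((l2norm f)\<^sup>2)" by (rule real_sqrt_le_mono)
    thus ?thesis by (simp add: L2_set_def abs_of_nonneg l2norm_nonneg)
  qed
  show "pcomp \<phi> f \<in> l2 \<Lambda>" "l2norm (pcomp \<phi> f) \<le> l2norm f"
    using l2_bounded[OF z *] by auto
qed

lemma pcomp_adjoint:
  assumes inv: "\<And>x y. \<phi> x = Some y \<longleftrightarrow> \<psi> y = Some x"
  shows "l2inner (pcomp \<phi> f) g = l2inner f (pcomp \<psi> g)"
proof -
  have i1: "\<And>x y. \<phi> x = Some y \<Longrightarrow> \<psi> y = Some x"
    and i2: "\<And>x y. \<psi> y = Some x \<Longrightarrow> \<phi> x = Some y"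
    using inv by auto
  define D where "D = {x. \<phi> x \<noteq> None}"
  define R where "R = {y. \<psi> y \<noteq> None}"
  have "l2inner (pcomp \<phi> f) g = (\<Sum>\<^sub>\<infinity>x\<in>D. cnj (f (the (\<phi> x))) * g x)"
    unfolding l2inner_def by (rule infsum_cong_neutral) (auto simp: pcomp_def D_def split: option.split)
  also have "\<dots> = (\<Sum>\<^sub>\<infinity>y\<in>R. cnj (f y) * g (the (\<psi> y)))"
    by (rule infsum_reindex_bij_witness[where i="\<lambda>y. the (\<psi> y)" and j="\<lambda>x. the (\<phi> x)"])
       (fastforce simp: D_def R_def dest: i1 i2)+
  also have "\<dots> = l2inner f (pcomp \<psi> g)"
    unfolding l2inner_def by (rule infsum_cong_neutral) (auto simp: pcomp_def R_def split: option.split)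
  finally show ?thesis .
qed

section \<open>Zigzag maps\<close>

locale groupoid_subcategory =
  fixes Y \<Lambda> :: "'a set" and r s i :: "'a \<Rightarrow> 'a" and m :: "'a \<Rightarrow> 'a \<Rightarrow> 'a"
  assumes G: "groupoid Y r s m i" and SC: "subcategory Y r s m \<Lambda>" and U: "r ` Y \<subseteq> \<Lambda>"
begin

lemma arrow_closed: "x \<in> Y \<Longrightarrow> r x \<in> Y"
  "x \<in> Y \<Longrightarrow> s x \<in> Y" "x \<in> Y \<Longrightarrow> i x \<in> Y"
  using G unfolding groupoid_def by auto

lemma rs_laws: "x \<in> Y \<Longrightarrow> r (r x) = r x" "x \<in> Y \<Longrightarrow> s (r x) = r x"
  "x \<in> Y \<Longrightarrow> r (s x) = s x" "x \<in> Y \<Longrightarrow> s (s x) = s x"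
  "x \<in> Y \<Longrightarrow> r (i x) = s x" "x \<in> Y \<Longrightarrow> s (i x) = r x"
  using G unfolding groupoid_def by auto

lemma unit_laws: "x \<in> Y \<Longrightarrow> m (r x) x = x" "x \<in> Y \<Longrightarrow> m x (s x) = x"
  "x \<in> Y \<Longrightarrow> m x (i x) = r x" "x \<in> Y \<Longrightarrow> m (i x) x = s x"
  using G unfolding groupoid_def by auto

lemma mult_laws: "x \<in> Y \<Longrightarrow> y \<in> Y \<Longrightarrow> s x = r y
  \<Longrightarrow> m x y \<in> Y"
  "x \<in> Y \<Longrightarrow> y \<in> Y \<Longrightarrow> s x = r y \<Longrightarrow> r (m x y) = r x"
  "x \<in> Y \<Longrightarrow> y \<in> Y \<Longrightarrow> s x = r y \<Longrightarrow> s (m x y) = s y"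
  using G unfolding groupoid_def by auto

lemma arrow_assoc: "x \<in> Y \<Longrightarrow> y \<in> Y \<Longrightarrow> z \<in> Y
  \<Longrightarrow> s x = r y \<Longrightarrow> s y = r z \<Longrightarrow> m (m x y) z = m x (m y z)"
  using G unfolding groupoid_def by auto

lemma subcat_in_Y: "x \<in> \<Lambda> \<Longrightarrow> x \<in> Y" using SC unfolding subcategory_def by auto

lemma subcat_mult_closed: "x \<in> \<Lambda> \<Longrightarrow> y \<in> \<Lambda>
  \<Longrightarrow> s x = r y \<Longrightarrow> m x y \<in> \<Lambda>"
  using SC unfolding subcategory_def by auto

lemma units_in_subcat: "x \<in> Y \<Longrightarrow> r x \<in> \<Lambda>" using U by auto

lemma inv_mult_cancel: "x \<in> Y \<Longrightarrow> y \<in> Y \<Longrightarrow> r y = s x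
  \<Longrightarrow> m (i x) (m x y) = y"
proof -
  assume a: "x \<in> Y" "y \<in> Y" "r y = s x"
  have "m (i x) (m x y) = m (m (i x) x) y" using a arrow_closed rs_laws by (simp add: arrow_assoc)
  also have "\<dots> = y" using a by (simp add: unit_laws) (metis unit_laws(1))
  finally show ?thesis .
qed

lemma mult_inv_cancel: "x \<in> Y \<Longrightarrow> y \<in> Y \<Longrightarrow> r y = r x
  \<Longrightarrow> m x (m (i x) y) = y"
proof -
  assume a: "x \<in> Y" "y \<in> Y" "r y = r x"
  have "m x (m (i x) y) = m (m x (i x)) y" using a arrow_closed rs_laws by (simp add: arrow_assoc)
  also have "\<dots> = y" using a by (simp add: unit_laws) (metis unit_laws(1))
  finally show ?thesis .
qed

lemma left_cancel:
  "x \<in> Y \<Longrightarrow> y \<in> Y \<Longrightarrow> y' \<in> Y \<Longrightarrow> r y = s x \<Longrightarrow> r y' = s x \<Longrightarrow> m x y = m x y' \<Longrightarrow> y = y'"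
  by (metis inv_mult_cancel)

abbreviation "tauL \<equiv> tau r s m \<Lambda>"
abbreviation "sigmaL \<equiv> sigma r s m \<Lambda>"
abbreviation "zz \<equiv> zzmap r s m \<Lambda>"
abbreviation "Wgen \<equiv> Cstar_gen \<Lambda> (Wop r m i \<Lambda> ` \<Lambda>)"

lemma sigma_Some_iff: assumes "a \<in> Y" shows "sigmaL a u = Some c \<longleftrightarrow> tauL a c = Some u"
proof -
  have uniq: "c' = c" if "c \<in> \<Lambda>" "r c = s a" "m a c = u" "c' \<in> \<Lambda>"
    "r c' = s a" "m a c' = u" for c c'
    using left_cancel[OF assms, of c c'] that subcat_in_Y by auto
  show ?thesis
  proof
    assume h: "sigmaL a u = Some c"
    then have ex: "\<exists>c\<in>\<Lambda>. r c = s a \<and> m a c = u"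
      by (auto simp: sigma_def split: if_splits)
    then obtain c0 where c0: "c0 \<in> \<Lambda>" "r c0 = s a" "m a c0 = u" by blast
    have "(THE c. c \<in> \<Lambda> \<and> r c = s a \<and> m a c = u) = c0"
      using c0 uniq by (intro the_equality) auto
    then have "c = c0" using h ex by (simp add: sigma_def)
    thus "tauL a c = Some u" using c0 by (simp add: tau_def)
  next
    assume h: "tauL a c = Some u"
    then have c: "c \<in> \<Lambda>" "r c = s a" "m a c = u" by (auto simp: tau_def split: if_splits)
    have "(THE c. c \<in> \<Lambda> \<and> r c = s a \<and> m a c = u) = c"
      using c uniq by (intro the_equality) auto
    thus "sigmaL a u = Some c" using c by (auto simp: sigma_def)
  qed
qed

lemma sigma_eq_if: assumes a: "a \<in> \<Lambda>"
  shows "sigmaL a u = (if u \<in> \<Lambda> \<and> r u = r a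
    \<and> m (i a) u \<in> \<Lambda> then Some (m (i a) u) else None)"
proof (cases "u \<in> \<Lambda> \<and> r u = r a \<and> m (i a) u \<in> \<Lambda>")
  case True
  have aY: "a \<in> Y" using a subcat_in_Y by auto
  have "r (m (i a) u) = s a"
    using mult_laws(2)[OF arrow_closed(3)[OF aY] subcat_in_Y[of u]] rs_laws(5,6)[OF aY] True by simp
  then have "tauL a (m (i a) u) = Some u"
    using True aY subcat_in_Y arrow_closed rs_laws mult_inv_cancel by (auto simp: tau_def)
  then show ?thesis using True sigma_Some_iff[OF aY] by simp
next
  case False
  have aY: "a \<in> Y" using a subcat_in_Y by auto
  have "sigmaL a u = None"
  proof (rule ccontr)
    assume "sigmaL a u \<noteq> None"
    then obtain c where "sigmaL a u = Some c" by auto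
    then have "tauL a c = Some u" using sigma_Some_iff[OF aY] by simp
    then have c: "c \<in> \<Lambda>" "r c = s a" "u = m a c" by (auto simp: tau_def split: if_splits)
    then have "u \<in> \<Lambda>" "r u = r a" "m (i a) u = c"
      using subcat_mult_closed[OF a c(1)] mult_laws[OF aY subcat_in_Y[OF c(1)]] inv_mult_cancel[OF aY subcat_in_Y[OF c(1)]] by auto
    thus False using False c by auto
  qed
  then show ?thesis using False by simp
qed

lemma Wop_eq_pcomp_sigma: assumes "a \<in> \<Lambda>" shows "Wop r m i \<Lambda> a = pcomp (sigmaL a)"
  by (rule ext, rule ext) (simp add: Wop_def pcomp_def sigma_eq_if[OF assms])

lemma zzmap_append: "zz (z1 @ z2) x
  = (case zz z2 x of None \<Rightarrow> None | Some y \<Rightarrow> zz z1 y)"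
  by (induction z1 arbitrary: x) (auto split: option.split)

definition letters_in :: "('a \<times> 'a) list \<Rightarrow> bool" where "letters_in z \<longleftrightarrow> (\<forall>(a,b)\<in>set z. a \<in> \<Lambda> \<and> b \<in> \<Lambda>)"

definition zz_reverse :: "('a \<times> 'a) list \<Rightarrow> ('a \<times> 'a) list" where
  "zz_reverse z = rev (map (\<lambda>(a,b). (b,a)) z)"

lemma letters_in_simps[simp]: "letters_in []"
  "letters_in ((a,b)#z) \<longleftrightarrow> a \<in> \<Lambda> \<and> b \<in> \<Lambda> \<and> letters_in z"
  "letters_in (z1 @ z2) \<longleftrightarrow> letters_in z1 \<and> letters_in z2"
  by (auto simp: letters_in_def)

lemma zz_reverse_simps[simp]: "zz_reverse [] = []" "zz_reverse ((a,b)#z) = zz_reverse z @ [(b,a)]"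
  "zz_reverse z = [] \<longleftrightarrow> z = []"
  "letters_in (zz_reverse z) \<longleftrightarrow> letters_in z"
  by (auto simp: zz_reverse_def letters_in_def)

lemma zzmap_Cons_Some: "zz ((a,b)#z) x = Some y \<longleftrightarrow> (\<exists>w. zz z x = Some w
  \<and> w \<in> \<Lambda> \<and> r w = s b \<and> sigmaL a (m b w) = Some y)"
  by (auto simp: bind_eq_Some_conv tau_def)

lemma zzmap_reverse_iff: "letters_in z
  \<Longrightarrow> zz z x = Some y \<longleftrightarrow> zz (zz_reverse z) y = Some x"
proof (induction z arbitrary: x y)
  case Nil
  then show ?case by auto
next
  case (Cons p z)
  obtain a b where p: "p = (a,b)" by fastforce
  have ab: "a \<in> Y" "b \<in> Y" "letters_in z" using Cons.prems p subcat_in_Y by auto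
  have "zz ((a,b)#z) x = Some y \<longleftrightarrow> (\<exists>w u. zz z x = Some w
    \<and> tauL b w = Some u \<and> sigmaL a u = Some y)"
    by (auto simp: bind_eq_Some_conv)
  also have "\<dots> \<longleftrightarrow> (\<exists>w u. zz (zz_reverse z) w = Some x
    \<and> sigmaL b u = Some w \<and> tauL a y = Some u)"
    using Cons.IH[OF ab(3)] sigma_Some_iff[OF ab(1)] sigma_Some_iff[OF ab(2)] by auto
  also have "\<dots> \<longleftrightarrow> zz (zz_reverse ((a,b)#z)) y = Some x"
    by (auto simp: zzmap_append bind_eq_Some_conv split: option.split)
  finally show ?case using p by simp
qed

lemma zzmap_inj: "letters_in z \<Longrightarrow> zz z x = Some y \<Longrightarrow> zz z x' = Some y
  \<Longrightarrow> x = x'"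
proof -
  assume a: "letters_in z" "zz z x = Some y" "zz z x' = Some y"
  have "zz (zz_reverse z) y = Some x" "zz (zz_reverse z) y = Some x'"
    using a zzmap_reverse_iff[OF a(1)] by blast+
  thus "x = x'" by simp
qed

lemma zzmap_dom_in: "z \<noteq> [] \<Longrightarrow> zz z x = Some y \<Longrightarrow> x \<in> \<Lambda>"
proof (induction z arbitrary: y)
  case Nil then show ?case by simp
next
  case (Cons p z)
  obtain a b where p: "p = (a,b)" by fastforce
  from Cons.prems obtain w where w: "zz z x = Some w" "w \<in> \<Lambda>" unfolding p zzmap_Cons_Some by auto
  show ?case
  proof (cases "z = []")
    case True then show ?thesis using w by simp
  next
    case False then show ?thesis using Cons.IH w by blast
  qed
qed

lemma zzmap_Cons_range: "a \<in> Y \<Longrightarrow> zz ((a,b)#z) x = Some y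
  \<Longrightarrow> y \<in> \<Lambda> \<and> r y = s a"
  by (auto simp: bind_eq_Some_conv sigma_Some_iff tau_def split: if_splits)

lemma zzmap_dom_r: "letters_in z \<Longrightarrow> z \<noteq> [] \<Longrightarrow> zz z x = Some y
  \<Longrightarrow> r x = s (snd (last z))"
proof (induction z arbitrary: y)
  case Nil then show ?case by simp
next
  case (Cons p z)
  obtain a b where p: "p = (a,b)" by fastforce
  from Cons.prems obtain w where w: "zz z x = Some w" "w \<in> \<Lambda>" "r w = s b"
    unfolding p zzmap_Cons_Some by blast
  show ?case
  proof (cases "z = []")
    case True then show ?thesis using w p by simp
  next
    case False then show ?thesis using Cons.IH w p Cons.prems by auto
  qed
qed

lemma zzmap_s: "letters_in z \<Longrightarrow> x \<in> Y \<Longrightarrow> zz z x = Some y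
  \<Longrightarrow> y \<in> Y \<and> s y = s x"
proof (induction z arbitrary: y)
  case Nil then show ?case by simp
next
  case (Cons p z)
  obtain a b where p: "p = (a,b)" by fastforce
  have ab: "a \<in> Y" "b \<in> Y" "letters_in z" using Cons.prems p subcat_in_Y by auto
  from Cons.prems obtain w where w: "zz z x = Some w" "w \<in> \<Lambda>" "r w = s b"
    "sigmaL a (m b w) = Some y"
    unfolding p zzmap_Cons_Some by blast
  have IH: "s w = s x" using Cons.IH[OF ab(3) Cons.prems(2) w(1)] by simp
  have t: "tauL a y = Some (m b w)" using w(4) sigma_Some_iff[OF ab(1)] by simp
  then have y: "y \<in> \<Lambda>" "r y = s a" "m b w = m a y" by (auto simp: tau_def split: if_splits)
  have "s (m b w) = s w" using mult_laws(3)[OF ab(2) subcat_in_Y[OF w(2)]] w by simp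
  moreover have "s (m a y) = s y" using mult_laws(3)[OF ab(1) subcat_in_Y[OF y(1)]] y by simp
  ultimately show ?case using IH y subcat_in_Y by simp
qed

lemma zigzagsD: "z \<in> zigzags r s \<Lambda> \<Longrightarrow> letters_in z \<and> z \<noteq> []"
  unfolding zigzags_def letters_in_def by (force simp: in_set_conv_nth)

lemma zigzags_single: "a \<in> \<Lambda> \<Longrightarrow> b \<in> \<Lambda>
  \<Longrightarrow> r a = r b \<Longrightarrow> [(a,b)] \<in> zigzags r s \<Lambda>"
  unfolding zigzags_def by auto

lemma zigzags_Cons: assumes "z \<in> zigzags r s \<Lambda>" "a \<in> \<Lambda>" "b \<in> \<Lambda>"
  "r a = r b" "s (fst (hd z)) = s b"
  shows "(a,b)#z \<in> zigzags r s \<Lambda>"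
proof -
  have ne: "z \<noteq> []" using assms(1) by (simp add: zigzags_def)
  have Z: "\<And>k. k < length z \<Longrightarrow> fst (z!k) \<in> \<Lambda> \<and> snd (z!k) \<in> \<Lambda>
      \<and> r (fst (z!k)) = r (snd (z!k)) \<and> (Suc k < length z \<longrightarrow> s (fst (z!Suc k)) = s (snd (z!k)))"
    using assms(1) by (simp add: zigzags_def)
  show ?thesis unfolding zigzags_def
  proof (safe)
    fix k assume k: "k < length ((a,b)#z)"
    show "fst (((a,b)#z)!k) \<in> \<Lambda>" "snd (((a,b)#z)!k) \<in> \<Lambda>"
      "r (fst (((a,b)#z)!k)) = r (snd (((a,b)#z)!k))"
      using k assms Z by (cases k; auto)+
    show "Suc k < length ((a,b)#z) \<Longrightarrow> s (fst (((a,b)#z)!Suc k)) = s (snd (((a,b)#z)!k))"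
      using k assms Z ne by (cases k) (auto simp: hd_conv_nth)
  qed
qed

lemma zigzag_if_defined: "letters_in z \<Longrightarrow> z \<noteq> []
  \<Longrightarrow> zz z x = Some y \<Longrightarrow> z \<in> zigzags r s \<Lambda>"
proof (induction z arbitrary: y)
  case Nil then show ?case by simp
next
  case (Cons p z)
  obtain a b where p: "p = (a,b)" by fastforce
  have ab: "a \<in> \<Lambda>" "b \<in> \<Lambda>" "letters_in z" using Cons.prems p by auto
  from Cons.prems obtain w where w: "zz z x = Some w" "w \<in> \<Lambda>" "r w = s b"
    "sigmaL a (m b w) = Some y"
    unfolding p zzmap_Cons_Some by blast
  have t: "tauL a y = Some (m b w)" using w(4) sigma_Some_iff[OF subcat_in_Y[OF ab(1)]] by simp
  then have y: "y \<in> \<Lambda>" "r y = s a" "m b w = m a y" by (auto simp: tau_def split: if_splits)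
  have rab: "r a = r b"
    using mult_laws(2)[OF subcat_in_Y[OF ab(2)] subcat_in_Y[OF w(2)]] mult_laws(2)[OF subcat_in_Y[OF ab(1)] subcat_in_Y[OF y(1)]] w y by simp
  show ?case
  proof (cases "z = []")
    case True then show ?thesis using p zigzags_single ab rab by simp
  next
    case False
    then obtain a' b' z' where z: "z = (a',b')#z'" by (metis list.exhaust prod.exhaust)
    have "r w = s a'" using zzmap_Cons_range[of a' b' z' x w] w z subcat_in_Y ab(3) by auto
    then have "s (fst (hd z)) = s b" using z w by simp
    then show ?thesis using zigzags_Cons[OF Cons.IH[OF ab(3) False w(1)] ab(1) ab(2) rab] p by simp
  qed
qed

lemma sigma_tau_mult_inv:
  assumes ab: "a \<in> \<Lambda>" "b \<in> \<Lambda>" and x: "x \<in> Y" and w: "w \<in> \<Lambda>"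
    "r w = s b" "s w = s x"
    and y: "sigmaL a (m b w) = Some y"
  shows "m y (i x) = m (i a) (m b (m w (i x)))"
proof -
  have aY: "a \<in> Y" and bY: "b \<in> Y" and wY: "w \<in> Y" using ab w subcat_in_Y by auto
  have t: "tauL a y = Some (m b w)" using y sigma_Some_iff[OF aY] by simp
  then have yy: "y \<in> \<Lambda>" "r y = s a" "m a y = m b w" by (auto simp: tau_def split: if_splits)
  have yY: "y \<in> Y" using yy subcat_in_Y by auto
  define u where "u = m b w"
  have uY: "u \<in> Y" "r u = r b" "s u = s w" using mult_laws[OF bY wY] w by (auto simp: u_def)
  have ru: "r u = r a" using mult_laws(2)[OF aY yY] yy by (simp add: u_def)
  have yeq: "y = m (i a) u" using inv_mult_cancel[OF aY yY] yy by (simp add: u_def)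
  have ixY: "i x \<in> Y" "r (i x) = s x" using arrow_closed rs_laws x by auto
  have "m y (i x) = m (i a) (m u (i x))"
    unfolding yeq by (rule arrow_assoc) (use arrow_closed(3)[OF aY] uY ixY rs_laws(6)[OF aY] ru w in auto)
  also have "m u (i x) = m b (m w (i x))"
    unfolding u_def by (rule arrow_assoc) (use bY wY ixY w in auto)
  finally show ?thesis .
qed

text \<open>\<phi>_\<zeta> is the restriction of left translation by a fixed groupoid element.\<close>

lemma zzmap_mult_inv_eq: "letters_in z \<Longrightarrow> x \<in> Y \<Longrightarrow> x' \<in> Y
  \<Longrightarrow> r x = r x' \<Longrightarrow> zz z x = Some y \<Longrightarrow> zz z x' = Some y'
   \<Longrightarrow> m y (i x) = m y' (i x')"
proof (induction z arbitrary: y y')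
  case Nil then show ?case using unit_laws(3) by auto
next
  case (Cons p z)
  obtain a b where p: "p = (a,b)" by fastforce
  have ab: "a \<in> \<Lambda>" "b \<in> \<Lambda>" "letters_in z" using Cons.prems p by auto
  from Cons.prems(5) obtain w where w: "zz z x = Some w" "w \<in> \<Lambda>" "r w = s b"
    "sigmaL a (m b w) = Some y"
    unfolding p zzmap_Cons_Some by blast
  from Cons.prems(6) obtain w' where w': "zz z x' = Some w'" "w' \<in> \<Lambda>" "r w' = s b"
    "sigmaL a (m b w') = Some y'"
    unfolding p zzmap_Cons_Some by blast
  have sw: "s w = s x" "s w' = s x'"
    using zzmap_s[OF ab(3) Cons.prems(2) w(1)] zzmap_s[OF ab(3) Cons.prems(3) w'(1)] by auto
  have IH: "m w (i x) = m w' (i x')" using Cons.IH[OF ab(3) Cons.prems(2,3,4) w(1) w'(1)] .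
  show ?case
    using sigma_tau_mult_inv[OF ab(1,2) Cons.prems(2) w(2,3) sw(1) w(4)] sigma_tau_mult_inv[OF ab(1,2) Cons.prems(3) w'(2,3) sw(2) w'(4)] IH
    by simp
qed

lemma zzmap_left_mult:
  assumes t: "t \<in> Y" and z: "letters_in z" "z \<noteq> []" and b: "zz z b = Some (m t b)" "r b = s t"
    and b': "zz z b' = Some y'"
  shows "y' = m t b' \<and> r b' = s t"
proof -
  have bL: "b \<in> \<Lambda>" "b' \<in> \<Lambda>" using zzmap_dom_in z b b' by blast+
  have bY: "b \<in> Y" "b' \<in> Y" using bL subcat_in_Y by auto
  have rb': "r b' = s t" using zzmap_dom_r[OF z b(1)] zzmap_dom_r[OF z b'] b by simp
  have G: "m y' (i b') = m (m t b) (i b)" using zzmap_mult_inv_eq[OF z(1) bY(2) bY(1) _ b' b(1)] rb' b by simp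
  also have "\<dots> = m t (m b (i b))" by (rule arrow_assoc) (use t bY arrow_closed rs_laws b in auto)
  also have "\<dots> = t" using unit_laws(3)[OF bY(1)] b unit_laws(2)[OF t] by simp
  finally have G': "m y' (i b') = t" .
  have ys: "y' \<in> Y" "s y' = s b'" using zzmap_s[OF z(1) bY(2) b'] by auto
  have "y' = m y' (m (i b') b')" using unit_laws(4)[OF bY(2)] unit_laws(2)[OF ys(1)] ys by simp
  also have "\<dots> = m (m y' (i b')) b'"
    by (rule arrow_assoc[symmetric]) (use ys bY arrow_closed rs_laws in auto)
  finally show ?thesis using G' rb' by simp
qed

definition zzop :: "('a \<times> 'a) list \<Rightarrow> 'a op" where "zzop z = pcomp (zz z)"

lemma zzop_l2: "letters_in z \<Longrightarrow> z \<noteq> [] \<Longrightarrow> f \<in> l2 \<Lambda>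
  \<Longrightarrow> zzop z f \<in> l2 \<Lambda> \<and> l2norm (zzop z f) \<le> l2norm f"
  unfolding zzop_def using pcomp_l2[of "zz z" \<Lambda> f] zzmap_inj zzmap_dom_in by blast

lemma zzop_adjoint: "letters_in z \<Longrightarrow> l2inner (zzop z f) g = l2inner f (zzop (zz_reverse z) g)"
  unfolding zzop_def by (rule pcomp_adjoint) (rule zzmap_reverse_iff)

lemma zzop_append: "zzop z1 (zzop z2 f) = zzop (z2 @ z1) f"
  by (rule ext) (simp add: zzop_def pcomp_def zzmap_append split: option.split)

lemma zzop_linear: "zzop z (\<lambda>y. c * g y + h y) x = c * zzop z g x + zzop z h x"
  "zzop z (\<lambda>y. g y - h y) x = zzop z g x - zzop z h x"
  by (simp_all add: zzop_def pcomp_def split: option.split)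

definition lincomb :: "(complex \<times> ('a \<times> 'a) list) list \<Rightarrow> 'a op" where
  "lincomb L f x = sum_list (map (\<lambda>(c,z). c * zzop z f x) L)"

definition admissible :: "(complex \<times> ('a \<times> 'a) list) list \<Rightarrow> bool" where
  "admissible L \<longleftrightarrow> (\<forall>(c,z)\<in>set L. letters_in z \<and> z \<noteq> [])"

definition coeff_norm :: "(complex \<times> ('a \<times> 'a) list) list \<Rightarrow> real" where
  "coeff_norm L = sum_list (map (\<lambda>(c,z). cmod c) L)"

lemma lincomb_simps: "lincomb [] f = (\<lambda>x. 0)"
  "lincomb ((c,z)#L) f = (\<lambda>x. c * zzop z f x + lincomb L f x)"
  by (auto simp: lincomb_def)

lemma admissible_simps[simp]: "admissible []"
  "admissible ((c,z)#L) \<longleftrightarrow> letters_in z \<and> z \<noteq> [] \<and> admissible L"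
  "admissible (L1 @ L2) \<longleftrightarrow> admissible L1 \<and> admissible L2"
  by (auto simp: admissible_def)

lemma coeff_norm_nonneg: "coeff_norm L \<ge> 0"
  unfolding coeff_norm_def by (induction L) auto

lemma lincomb_l2: "admissible L \<Longrightarrow> f \<in> l2 \<Lambda>
  \<Longrightarrow> lincomb L f \<in> l2 \<Lambda> \<and> l2norm (lincomb L f) \<le> coeff_norm L * l2norm f"
proof (induction L)
  case Nil then show ?case by (simp add: lincomb_simps l2_zero coeff_norm_def)
next
  case (Cons p L)
  obtain c z where p: "p = (c,z)" by fastforce
  have g: "letters_in z" "z \<noteq> []" "admissible L" using Cons.prems p by auto
  have V: "zzop z f \<in> l2 \<Lambda>" "l2norm (zzop z f) \<le> l2norm f"
    using zzop_l2[OF g(1,2) Cons.prems(2)] by auto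
  have cV: "(\<lambda>x. c * zzop z f x) \<in> l2 \<Lambda>"
    "l2norm (\<lambda>x. c * zzop z f x) = cmod c * l2norm (zzop z f)"
    using l2_scale[OF V(1)] by auto
  have IH: "lincomb L f \<in> l2 \<Lambda>" "l2norm (lincomb L f) \<le> coeff_norm L * l2norm f"
    using Cons.IH[OF g(3) Cons.prems(2)] by auto
  have A: "(\<lambda>x. c * zzop z f x + lincomb L f x) \<in> l2 \<Lambda>"
    "l2norm (\<lambda>x. c * zzop z f x + lincomb L f x)
      \<le> l2norm (\<lambda>x. c * zzop z f x) + l2norm (lincomb L f)"
    using l2_add[OF cV(1) IH(1)] by auto
  have "cmod c * l2norm (zzop z f) \<le> cmod c * l2norm f" using V(2) by (simp add: mult_left_mono)
  then have "l2norm (\<lambda>x. c * zzop z f x + lincomb L f x) \<le> (cmod c + coeff_norm L) * l2norm f"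
    using A(2) cV(2) IH(2) by (simp add: distrib_right)
  then show ?case using A(1) p by (simp add: lincomb_simps coeff_norm_def)
qed

definition adj_coeffs :: "(complex \<times> ('a \<times> 'a) list) list \<Rightarrow> (complex \<times> ('a \<times> 'a) list) list" where
  "adj_coeffs L = map (\<lambda>(c,z). (cnj c, zz_reverse z)) L"

lemma adj_coeffs_simps[simp]: "adj_coeffs [] = []"
  "adj_coeffs ((c,z)#L) = (cnj c, zz_reverse z) # adj_coeffs L"
    "admissible (adj_coeffs L) \<longleftrightarrow> admissible L"
  by (auto simp: adj_coeffs_def admissible_def)

lemma lincomb_adjoint: "admissible L \<Longrightarrow> f \<in> l2 \<Lambda>
  \<Longrightarrow> g \<in> l2 \<Lambda>
    \<Longrightarrow> l2inner (lincomb L f) g = l2inner f (lincomb (adj_coeffs L) g)"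
proof (induction L)
  case Nil then show ?case by (simp add: lincomb_simps l2inner_def)
next
  case (Cons p L)
  obtain c z where p: "p = (c,z)" by fastforce
  have gd: "letters_in z" "z \<noteq> []" "admissible L" using Cons.prems p by auto
  have gd': "letters_in (zz_reverse z)" "zz_reverse z \<noteq> []" "admissible (adj_coeffs L)"
    using gd by auto
  have V: "zzop z f \<in> l2 \<Lambda>" using zzop_l2[OF gd(1,2) Cons.prems(2)] by auto
  have V': "zzop (zz_reverse z) g \<in> l2 \<Lambda>" using zzop_l2[OF gd'(1,2) Cons.prems(3)] by auto
  have S: "lincomb L f \<in> l2 \<Lambda>" using lincomb_l2[OF gd(3) Cons.prems(2)] by auto
  have S': "lincomb (adj_coeffs L) g \<in> l2 \<Lambda>" using lincomb_l2[OF gd'(3) Cons.prems(3)] by auto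
  have "l2inner (\<lambda>x. c * zzop z f x + lincomb L f x) g
    = l2inner (\<lambda>x. c * zzop z f x) g + l2inner (lincomb L f) g"
    by (rule l2inner_add_left[OF Cons.prems(3) l2_scale(1)[OF V] S])
  also have "\<dots> = cnj c * l2inner f (zzop (zz_reverse z) g) + l2inner f (lincomb (adj_coeffs L) g)"
    using Cons.IH[OF gd(3) Cons.prems(2,3)] by (simp add: l2inner_scale_left zzop_adjoint[OF gd(1)])
  also have "\<dots> = l2inner f (\<lambda>x. cnj c * zzop (zz_reverse z) g x) + l2inner f (lincomb (adj_coeffs L) g)"
    by (simp add: l2inner_scale_right)
  also have "\<dots> = l2inner f (\<lambda>x. cnj c * zzop (zz_reverse z) g x + lincomb (adj_coeffs L) g x)"
    by (rule l2inner_add_right[OF Cons.prems(2) l2_scale(1)[OF V'] S', symmetric])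
  finally show ?case using p by (simp add: lincomb_simps)
qed

lemma lincomb_diff: "lincomb L (\<lambda>x. f x - g x) x = lincomb L f x - lincomb L g x"
  by (induction L) (auto simp: lincomb_simps zzop_linear algebra_simps)

lemma lincomb_append: "lincomb (L1 @ L2) f x = lincomb L1 f x + lincomb L2 f x"
  by (simp add: lincomb_def)

lemma lincomb_scale: "lincomb (map (\<lambda>(c,z). (k*c, z)) L) f x = k * lincomb L f x"
  by (induction L) (auto simp: lincomb_simps algebra_simps)

lemma admissible_scale[simp]: "admissible (map (\<lambda>(c,z). (k*c, z)) L)
  \<longleftrightarrow> admissible L"
  by (auto simp: admissible_def)

lemma zzop_lincomb: "zzop z (lincomb L f) x = lincomb (map (\<lambda>(c,z2). (c, z2 @ z)) L) f x"
proof (induction L)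
  case Nil then show ?case by (simp add: lincomb_simps zzop_def pcomp_def split: option.split)
next
  case (Cons p L)
  obtain c z2 where p: "p = (c,z2)" by fastforce
  show ?case using Cons.IH unfolding p by (simp add: lincomb_simps zzop_linear(1) zzop_append)
qed

definition comp_coeffs :: "(complex \<times> ('a \<times> 'a) list) list \<Rightarrow> (complex \<times> ('a \<times> 'a) list) list \<Rightarrow> (complex \<times> ('a \<times> 'a) list) list" where
  "comp_coeffs L1 L2 = concat (map (\<lambda>(c1,z1). map (\<lambda>(c2,z2). (c1*c2, z2 @ z1)) L2) L1)"

lemma lincomb_comp: "lincomb L1 (lincomb L2 f) x = lincomb (comp_coeffs L1 L2) f x"
proof (induction L1)
  case Nil then show ?case by (simp add: lincomb_simps comp_coeffs_def lincomb_def)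
next
  case (Cons p L1)
  obtain c z where p: "p = (c,z)" by fastforce
  have e: "map (\<lambda>(c2,z2). (c*c2, z2 @ z)) L2
    = map (\<lambda>(c',z'). (c*c', z')) (map (\<lambda>(c2,z2). (c2, z2 @ z)) L2)"
    by (induction L2) auto
  have "lincomb (comp_coeffs ((c,z)#L1) L2) f x
    = lincomb (map (\<lambda>(c2,z2). (c*c2, z2 @ z)) L2 @ comp_coeffs L1 L2) f x"
    by (simp add: comp_coeffs_def)
  also have "\<dots> = c * lincomb (map (\<lambda>(c2,z2). (c2, z2 @ z)) L2) f x + lincomb (comp_coeffs L1 L2) f x"
    unfolding lincomb_append e lincomb_scale ..
  also have "\<dots> = lincomb ((c,z)#L1) (lincomb L2 f) x"
    using Cons.IH by (simp add: lincomb_simps zzop_lincomb)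
  finally show ?case using p by simp
qed

lemma admissible_comp: "admissible L1 \<Longrightarrow> admissible L2
  \<Longrightarrow> admissible (comp_coeffs L1 L2)"
  by (auto simp: admissible_def comp_coeffs_def)

section \<open>Norm limits of combinations of zigzag operators\<close>

definition approximable :: "'a op \<Rightarrow> bool" where
  "approximable T \<longleftrightarrow> (\<forall>f\<in>l2 \<Lambda>. T f \<in> l2 \<Lambda>) \<and>
     (\<forall>\<epsilon>>0. \<exists>L. admissible L
       \<and> (\<forall>f\<in>l2 \<Lambda>. l2norm (\<lambda>x. T f x - lincomb L f x)
         \<le> \<epsilon> * l2norm f))"

lemma approximableD: "approximable T \<Longrightarrow> f \<in> l2 \<Lambda>
  \<Longrightarrow> T f \<in> l2 \<Lambda>"
  "approximable T \<Longrightarrow> \<epsilon> > 0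
    \<Longrightarrow> \<exists>L. admissible L
      \<and> (\<forall>f\<in>l2 \<Lambda>. l2norm (\<lambda>x. T f x - lincomb L f x)
        \<le> \<epsilon> * l2norm f)"
  unfolding approximable_def by blast+

lemma approximable_bounded:
  assumes "approximable T" shows "\<exists>C\<ge>0. \<forall>f\<in>l2 \<Lambda>. l2norm (T f) \<le> C * l2norm f"
proof -
  obtain L where L: "admissible L"
    "\<And>f. f\<in>l2 \<Lambda>
      \<Longrightarrow> l2norm (\<lambda>x. T f x - lincomb L f x) \<le> 1 * l2norm f"
    using approximableD(2)[OF assms, of 1] by auto
  have "l2norm (T f) \<le> (1 + coeff_norm L) * l2norm f" if f: "f \<in> l2 \<Lambda>" for f
  proof -
    have S: "lincomb L f \<in> l2 \<Lambda>" "l2norm (lincomb L f) \<le> coeff_norm L * l2norm f"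
      using lincomb_l2[OF L(1) f] by auto
    have e: "T f = (\<lambda>x. (\<lambda>x. T f x - lincomb L f x) x + lincomb L f x)" by auto
    have "l2norm (T f) \<le> l2norm (\<lambda>x. T f x - lincomb L f x) + l2norm (lincomb L f)"
      by (subst e, rule l2_add(2)[OF l2_diff(1)[OF approximableD(1)[OF assms f] S(1)] S(1)])
    also have "\<dots> \<le> (1 + coeff_norm L) * l2norm f" using L(2)[OF f] S(2) by (simp add: distrib_right)
    finally show ?thesis .
  qed
  thus ?thesis using coeff_norm_nonneg[of L] by (intro exI[of _ "1 + coeff_norm L"]) auto
qed

lemma zzmap_single: assumes a: "a \<in> \<Lambda>" shows "zz [(a, r a)] x = sigmaL a x"
proof -
  have aY: "a \<in> Y" using a subcat_in_Y by auto
  show ?thesis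
  proof (cases "x \<in> \<Lambda> \<and> r x = r a")
    case True
    then have "m (r a) x = x" using unit_laws(1)[of x] subcat_in_Y by auto
    then show ?thesis using True rs_laws(2)[OF aY] by (simp add: tau_def)
  next
    case False
    then show ?thesis using rs_laws(2)[OF aY] by (auto simp: tau_def sigma_eq_if[OF a])
  qed
qed

lemma approximable_Wop: assumes a: "a \<in> \<Lambda>" shows "approximable (Wop r m i \<Lambda> a)"
proof -
  have aY: "a \<in> Y" using a subcat_in_Y by auto
  have W: "Wop r m i \<Lambda> a = zzop [(a, r a)]"
    unfolding Wop_eq_pcomp_sigma[OF a] zzop_def
      by (rule arg_cong[where f=pcomp], rule ext, rule zzmap_single[OF a, symmetric])
  have g: "admissible [(1, [(a, r a)])]" using a units_in_subcat[OF aY] by simp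
  have sp: "lincomb [(1, [(a, r a)])] f = Wop r m i \<Lambda> a f" for f
    by (simp add: lincomb_simps W)
  show ?thesis unfolding approximable_def
  proof (intro conjI ballI allI impI)
    fix f assume "f \<in> l2 \<Lambda>" then show "Wop r m i \<Lambda> a f \<in> l2 \<Lambda>"
      using zzop_l2[of "[(a, r a)]" f] a units_in_subcat[OF aY] W by simp
  next
    fix \<epsilon> :: real assume "\<epsilon> > 0"
    then show "\<exists>L. admissible L
      \<and> (\<forall>f\<in>l2 \<Lambda>. l2norm (\<lambda>x. Wop r m i \<Lambda> a f x - lincomb L f x) \<le> \<epsilon> * l2norm f)"
      using g sp by (intro exI[of _ "[(1, [(a, r a)])]"]) (simp add: l2_zero l2norm_nonneg)
  qed
qed

lemma approximable_add:
  assumes T: "approximable T" and U: "approximable U" shows "approximable (\<lambda>f x. T f x + U f x)"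
  unfolding approximable_def
proof (intro conjI ballI allI impI)
  fix f assume "f \<in> l2 \<Lambda>" then show "(\<lambda>x. T f x + U f x) \<in> l2 \<Lambda>"
    using l2_add(1) approximableD(1)[OF T] approximableD(1)[OF U] by blast
next
  fix \<epsilon> :: real assume e: "\<epsilon> > 0"
  obtain L1 where L1: "admissible L1"
    "\<And>f. f\<in>l2 \<Lambda>
      \<Longrightarrow> l2norm (\<lambda>x. T f x - lincomb L1 f x) \<le> \<epsilon>/2 * l2norm f"
    using approximableD(2)[OF T, of "\<epsilon>/2"] e by auto
  obtain L2 where L2: "admissible L2"
    "\<And>f. f\<in>l2 \<Lambda>
      \<Longrightarrow> l2norm (\<lambda>x. U f x - lincomb L2 f x) \<le> \<epsilon>/2 * l2norm f"
    using approximableD(2)[OF U, of "\<epsilon>/2"] e by auto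
  have "l2norm (\<lambda>x. T f x + U f x - lincomb (L1 @ L2) f x)
    \<le> \<epsilon> * l2norm f" if f: "f \<in> l2 \<Lambda>" for f
  proof -
    have e1: "(\<lambda>x. T f x + U f x - lincomb (L1 @ L2) f x)
      = (\<lambda>x. (\<lambda>x. T f x - lincomb L1 f x) x + (\<lambda>x. U f x - lincomb L2 f x) x)"
      by (auto simp: lincomb_append)
    have "l2norm (\<lambda>x. T f x + U f x - lincomb (L1 @ L2) f x)
      \<le> l2norm (\<lambda>x. T f x - lincomb L1 f x) + l2norm (\<lambda>x. U f x - lincomb L2 f x)"
      unfolding e1 by (rule l2_add(2)[OF l2_diff(1)[OF approximableD(1)[OF T f] conjunct1[OF lincomb_l2[OF L1(1) f]]]
          l2_diff(1)[OF approximableD(1)[OF U f] conjunct1[OF lincomb_l2[OF L2(1) f]]]])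
    also have "\<dots> \<le> \<epsilon> * l2norm f" using L1(2)[OF f] L2(2)[OF f] by simp
    finally show ?thesis .
  qed
  then show "\<exists>L. admissible L
    \<and> (\<forall>f\<in>l2 \<Lambda>. l2norm (\<lambda>x. T f x + U f x - lincomb L f x)
      \<le> \<epsilon> * l2norm f)"
    using L1(1) L2(1) by (intro exI[of _ "L1 @ L2"]) auto
qed

lemma approximable_scale: assumes T: "approximable T" shows "approximable (\<lambda>f x. c * T f x)"
  unfolding approximable_def
proof (intro conjI ballI allI impI)
  fix f assume "f \<in> l2 \<Lambda>" then show "(\<lambda>x. c * T f x) \<in> l2 \<Lambda>"
    using l2_scale(1) approximableD(1)[OF T] by blast
next
  fix \<epsilon> :: real assume e: "\<epsilon> > 0"
  define \<delta> where "\<delta> = \<epsilon> / (cmod c + 1)"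
  have cp: "0 < cmod c + 1" using norm_ge_zero[of c] by linarith
  have d: "\<delta> > 0" "cmod c * \<delta> \<le> \<epsilon>" using e cp unfolding \<delta>_def
    by (auto simp: field_simps)
  obtain L where L: "admissible L"
    "\<And>f. f\<in>l2 \<Lambda>
      \<Longrightarrow> l2norm (\<lambda>x. T f x - lincomb L f x) \<le> \<delta> * l2norm f"
    using approximableD(2)[OF T d(1)] by auto
  let ?L = "map (\<lambda>(c',z). (c*c', z)) L"
  have "l2norm (\<lambda>x. c * T f x - lincomb ?L f x)
    \<le> \<epsilon> * l2norm f" if f: "f \<in> l2 \<Lambda>" for f
  proof -
    have e1: "(\<lambda>x. c * T f x - lincomb ?L f x)
      = (\<lambda>x. c * (\<lambda>x. T f x - lincomb L f x) x)"
      by (auto simp: lincomb_scale right_diff_distrib)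
    have "l2norm (\<lambda>x. c * T f x - lincomb ?L f x)
      = cmod c * l2norm (\<lambda>x. T f x - lincomb L f x)"
      unfolding e1 by (rule l2_scale(2)[OF l2_diff(1)[OF approximableD(1)[OF T f] conjunct1[OF lincomb_l2[OF L(1) f]]]])
    also have "\<dots> \<le> cmod c * (\<delta> * l2norm f)" using L(2)[OF f] by (simp add: mult_left_mono)
    also have "\<dots> \<le> \<epsilon> * l2norm f" using d(2) l2norm_nonneg[of f]
      by (simp add: mult.assoc[symmetric] mult_right_mono)
    finally show ?thesis .
  qed
  then show "\<exists>L. admissible L
    \<and> (\<forall>f\<in>l2 \<Lambda>. l2norm (\<lambda>x. c * T f x - lincomb L f x)
      \<le> \<epsilon> * l2norm f)"
    using L(1) by (intro exI[of _ ?L]) auto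
qed

lemma approximable_mult:
  assumes T: "approximable T" and U: "approximable U" shows "approximable (\<lambda>f. T (U f))"
  unfolding approximable_def
proof (intro conjI ballI allI impI)
  fix f assume "f \<in> l2 \<Lambda>" then show "T (U f) \<in> l2 \<Lambda>"
    using approximableD(1)[OF T] approximableD(1)[OF U] by blast
next
  fix \<epsilon> :: real assume e: "\<epsilon> > 0"
  obtain C where C: "C \<ge> 0"
    "\<And>f. f\<in>l2 \<Lambda> \<Longrightarrow> l2norm (U f) \<le> C * l2norm f"
      using approximable_bounded[OF U] by auto
  define \<delta>1 where "\<delta>1 = \<epsilon> / (2 * (C + 1))"
  have d1: "\<delta>1 > 0" "\<delta>1 * C \<le> \<epsilon> / 2" using e C(1) unfolding \<delta>1_def
    by (auto simp: field_simps)
  obtain L1 where L1: "admissible L1"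
    "\<And>f. f\<in>l2 \<Lambda>
      \<Longrightarrow> l2norm (\<lambda>x. T f x - lincomb L1 f x) \<le> \<delta>1 * l2norm f"
    using approximableD(2)[OF T d1(1)] by auto
  define \<delta>2 where "\<delta>2 = \<epsilon> / (2 * (coeff_norm L1 + 1))"
  have d2: "\<delta>2 > 0" "coeff_norm L1 * \<delta>2 \<le> \<epsilon> / 2"
    using e coeff_norm_nonneg[of L1] unfolding \<delta>2_def by (auto simp: field_simps)
  obtain L2 where L2: "admissible L2"
    "\<And>f. f\<in>l2 \<Lambda>
      \<Longrightarrow> l2norm (\<lambda>x. U f x - lincomb L2 f x) \<le> \<delta>2 * l2norm f"
    using approximableD(2)[OF U d2(1)] by auto
  have "l2norm (\<lambda>x. T (U f) x - lincomb (comp_coeffs L1 L2) f x)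
    \<le> \<epsilon> * l2norm f" if f: "f \<in> l2 \<Lambda>" for f
  proof -
    have Uf: "U f \<in> l2 \<Lambda>" using approximableD(1)[OF U f] .
    have S2: "lincomb L2 f \<in> l2 \<Lambda>" using lincomb_l2[OF L2(1) f] by auto
    have S1U: "lincomb L1 (U f) \<in> l2 \<Lambda>" using lincomb_l2[OF L1(1) Uf] by auto
    have S12: "lincomb L1 (lincomb L2 f) \<in> l2 \<Lambda>" using lincomb_l2[OF L1(1) S2] by auto
    have D: "(\<lambda>x. U f x - lincomb L2 f x) \<in> l2 \<Lambda>" using l2_diff(1)[OF Uf S2] .
    have ec: "lincomb (comp_coeffs L1 L2) f = lincomb L1 (lincomb L2 f)"
      by (rule ext) (simp add: lincomb_comp)
    have "l2norm (\<lambda>x. T (U f) x - lincomb (comp_coeffs L1 L2) f x)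
        \<le> l2norm (\<lambda>x. T (U f) x - lincomb L1 (U f) x) + l2norm (\<lambda>x. lincomb L1 (U f) x - lincomb L1 (lincomb L2 f) x)"
      unfolding ec by (rule l2norm_diff_triangle[OF approximableD(1)[OF T Uf] S1U S12])
    also have "lincomb L1 (\<lambda>x. U f x - lincomb L2 f x)
      = (\<lambda>x. lincomb L1 (U f) x - lincomb L1 (lincomb L2 f) x)"
      by (rule ext) (rule lincomb_diff)
    then have "l2norm (\<lambda>x. lincomb L1 (U f) x - lincomb L1 (lincomb L2 f) x)
      = l2norm (lincomb L1 (\<lambda>x. U f x - lincomb L2 f x))"
      by simp
    also have "\<dots> \<le> coeff_norm L1 * l2norm (\<lambda>x. U f x - lincomb L2 f x)"
      using lincomb_l2[OF L1(1) D] by auto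
    also have "\<dots> \<le> coeff_norm L1 * (\<delta>2 * l2norm f)"
      using L2(2)[OF f] coeff_norm_nonneg by (simp add: mult_left_mono)
    also have "l2norm (\<lambda>x. T (U f) x - lincomb L1 (U f) x) \<le> \<delta>1 * l2norm (U f)"
      using L1(2)[OF Uf] .
    also have "\<dots> \<le> \<delta>1 * (C * l2norm f)" using C(2)[OF f] d1(1) by (simp add: mult_left_mono)
    finally have "l2norm (\<lambda>x. T (U f) x - lincomb (comp_coeffs L1 L2) f x)
      \<le> (\<delta>1 * C) * l2norm f + (coeff_norm L1 * \<delta>2) * l2norm f"
      by (simp add: mult.assoc)
    also have "\<dots> \<le> (\<epsilon>/2) * l2norm f + (\<epsilon>/2) * l2norm f"
      using d1(2) d2(2) l2norm_nonneg[of f] by (intro add_mono mult_right_mono) auto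
    finally show ?thesis by simp
  qed
  then show "\<exists>L. admissible L
    \<and> (\<forall>f\<in>l2 \<Lambda>. l2norm (\<lambda>x. T (U f) x - lincomb L f x)
      \<le> \<epsilon> * l2norm f)"
    using admissible_comp[OF L1(1) L2(1)] by (intro exI[of _ "comp_coeffs L1 L2"]) auto
qed

lemma approximable_adj:
  assumes T: "approximable T" and T': "\<forall>g\<in>l2 \<Lambda>. T' g \<in> l2 \<Lambda>"
  and adj: "\<forall>f\<in>l2 \<Lambda>. \<forall>g\<in>l2 \<Lambda>. l2inner (T f) g = l2inner f (T' g)"
  shows "approximable T'"
  unfolding approximable_def
proof (intro conjI ballI allI impI)
  fix f assume "f \<in> l2 \<Lambda>" then show "T' f \<in> l2 \<Lambda>" using T' by blast
next
  fix \<epsilon> :: real assume e: "\<epsilon> > 0"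
  obtain L where L: "admissible L"
    "\<And>f. f\<in>l2 \<Lambda>
      \<Longrightarrow> l2norm (\<lambda>x. T f x - lincomb L f x) \<le> \<epsilon> * l2norm f"
    using approximableD(2)[OF T e] by auto
  have gL: "admissible (adj_coeffs L)" using L(1) by simp
  have "l2norm (\<lambda>x. T' g x - lincomb (adj_coeffs L) g x)
    \<le> \<epsilon> * l2norm g" if g: "g \<in> l2 \<Lambda>" for g
  proof -
    define v where "v = (\<lambda>x. T' g x - lincomb (adj_coeffs L) g x)"
    have T'g: "T' g \<in> l2 \<Lambda>" using T' g by blast
    have S'g: "lincomb (adj_coeffs L) g \<in> l2 \<Lambda>" using lincomb_l2[OF gL g] by auto
    have v: "v \<in> l2 \<Lambda>" unfolding v_def by (rule l2_diff(1)[OF T'g S'g])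
    have Tv: "T v \<in> l2 \<Lambda>" using approximableD(1)[OF T v] .
    have Sv: "lincomb L v \<in> l2 \<Lambda>" using lincomb_l2[OF L(1) v] by auto
    have "complex_of_real ((l2norm v)\<^sup>2) = l2inner v v" using l2inner_self[OF v] by simp
    also have "\<dots> = l2inner v (T' g) - l2inner v (lincomb (adj_coeffs L) g)"
      by (subst (2) v_def) (rule l2inner_diff_right[OF v T'g S'g])
    also have "\<dots> = l2inner (T v) g - l2inner (lincomb L v) g"
      using adj v g lincomb_adjoint[OF L(1) v g] by simp
    also have "\<dots> = l2inner (\<lambda>x. T v x - lincomb L v x) g"
      by (rule l2inner_diff_left[OF g Tv Sv, symmetric])
    finally have eq: "complex_of_real ((l2norm v)\<^sup>2) = l2inner (\<lambda>x. T v x - lincomb L v x) g" .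
    have "(l2norm v)\<^sup>2 = cmod (complex_of_real ((l2norm v)\<^sup>2))"
      by (simp only: norm_of_real abs_power2)
    also have "\<dots> = cmod (l2inner (\<lambda>x. T v x - lincomb L v x) g)" by (simp only: eq)
    also have "\<dots> \<le> l2norm (\<lambda>x. T v x - lincomb L v x) * l2norm g"
      by (rule l2inner_Cauchy_Schwarz[OF l2_diff(1)[OF Tv Sv] g])
    also have "\<dots> \<le> (\<epsilon> * l2norm v) * l2norm g"
      using L(2)[OF v] l2norm_nonneg[of g] by (rule mult_right_mono)
    finally have "l2norm v * l2norm v \<le> l2norm v * (\<epsilon> * l2norm g)"
      by (simp add: power2_eq_square mult_ac)
    then have "l2norm v \<le> \<epsilon> * l2norm g"
      using l2norm_nonneg[of v] l2norm_nonneg[of g] e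
      by (cases "l2norm v = 0") (auto simp: mult_le_cancel_left)
    then show ?thesis unfolding v_def .
  qed
  then show "\<exists>L. admissible L
    \<and> (\<forall>g\<in>l2 \<Lambda>. l2norm (\<lambda>x. T' g x - lincomb L g x)
      \<le> \<epsilon> * l2norm g)"
    using gL by (intro exI[of _ "adj_coeffs L"]) auto
qed

lemma approximable_lim:
  assumes Ts: "\<And>n::nat. approximable (Ts n)" and T: "\<forall>f\<in>l2 \<Lambda>. T f \<in> l2 \<Lambda>"
  and conv: "\<forall>\<epsilon>>0. \<exists>N. \<forall>n\<ge>N. \<forall>f\<in>l2 \<Lambda>. l2norm (\<lambda>x. Ts n f x - T f x) \<le> \<epsilon> * l2norm f"
  shows "approximable T"
  unfolding approximable_def
proof (intro conjI ballI allI impI)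
  fix f assume "f \<in> l2 \<Lambda>" then show "T f \<in> l2 \<Lambda>" using T by blast
next
  fix \<epsilon> :: real assume e: "\<epsilon> > 0"
  obtain N where N: "\<And>f. f\<in>l2 \<Lambda>
    \<Longrightarrow> l2norm (\<lambda>x. Ts N f x - T f x) \<le> \<epsilon>/2 * l2norm f"
    using conv e by (metis half_gt_zero order_refl)
  obtain L where L: "admissible L"
    "\<And>f. f\<in>l2 \<Lambda>
      \<Longrightarrow> l2norm (\<lambda>x. Ts N f x - lincomb L f x) \<le> \<epsilon>/2 * l2norm f"
    using approximableD(2)[OF Ts, of "\<epsilon>/2" N] e by auto
  have "l2norm (\<lambda>x. T f x - lincomb L f x)
    \<le> \<epsilon> * l2norm f" if f: "f \<in> l2 \<Lambda>" for f
  proof -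
    have "l2norm (\<lambda>x. T f x - lincomb L f x)
      \<le> l2norm (\<lambda>x. T f x - Ts N f x) + l2norm (\<lambda>x. Ts N f x - lincomb L f x)"
      by (rule l2norm_diff_triangle[OF _ approximableD(1)[OF Ts f] conjunct1[OF lincomb_l2[OF L(1) f]]]) (use T f in blast)
    also have "\<dots> \<le> \<epsilon>/2 * l2norm f + \<epsilon>/2 * l2norm f"
      using N[OF f] L(2)[OF f] l2norm_minus_commute[of "T f" "Ts N f"] by simp
    finally show ?thesis by simp
  qed
  then show "\<exists>L. admissible L
    \<and> (\<forall>f\<in>l2 \<Lambda>. l2norm (\<lambda>x. T f x - lincomb L f x)
      \<le> \<epsilon> * l2norm f)"
    using L(1) by (intro exI[of _ L]) auto
qed

lemma approximable_if_Wgen: "T \<in> Wgen \<Longrightarrow> approximable T"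
proof (induction rule: Cstar_gen.induct)
  case (gen T) then show ?case using approximable_Wop by auto
next
  case (add T U) then show ?case using approximable_add by blast
next
  case (scale T c) then show ?case using approximable_scale by blast
next
  case (mult T U) then show ?case using approximable_mult by blast
next
  case (adj T T') then show ?case using approximable_adj by blast
next
  case (lim Ts T) then show ?case using approximable_lim by blast
qed

section \<open>Zigzag covers\<close>

lemma lincomb_basis_vec_zero: "(\<forall>(c,z)\<in>set L. zz z x \<noteq> Some b)
  \<Longrightarrow> lincomb L (basis_vec b) x = 0"
  by (induction L) (auto simp: lincomb_simps zzop_def pcomp_def basis_vec_def split: option.split)

text \<open>Test the approximation on the basis vector at b: W_t sends it to the basis vector at t b,
  while a combination of zigzag operators can only reach t b through a zigzag mapping t b to b.\<close>

lemma approximable_Wop_reaches: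
  assumes t: "t \<in> Y" and W: "approximable (Wop r m i \<Lambda> t)"
  obtains L where "admissible L"
    "\<And>b. b \<in> \<Lambda> \<Longrightarrow> r b = s t \<Longrightarrow> m t b \<in> \<Lambda>
      \<Longrightarrow> \<exists>c z. (c,z) \<in> set L \<and> zz z (m t b) = Some b"
proof -
  obtain L where L: "admissible L"
    "\<And>f. f\<in>l2 \<Lambda>
      \<Longrightarrow> l2norm (\<lambda>x. Wop r m i \<Lambda> t f x - lincomb L f x) \<le> 1/2 * l2norm f"
    using approximableD(2)[OF W, of "1/2"] by auto
  have "\<exists>c z. (c,z) \<in> set L \<and> zz z (m t b) = Some b"
    if b: "b \<in> \<Lambda>" "r b = s t" "m t b \<in> \<Lambda>" for b
  proof (rule ccontr)
    assume none: "\<not> ?thesis"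
    have bY: "b \<in> Y" using b subcat_in_Y by auto
    have e: "basis_vec b \<in> l2 \<Lambda>" "l2norm (basis_vec b) = 1" using basis_vec_l2[OF b(1)] by auto
    let ?D = "\<lambda>x. Wop r m i \<Lambda> t (basis_vec b) x - lincomb L (basis_vec b) x"
    have "Wop r m i \<Lambda> t (basis_vec b) (m t b) = 1"
      using b mult_laws(2)[OF t bY] inv_mult_cancel[OF t bY] by (simp add: Wop_def basis_vec_def)
    moreover have "lincomb L (basis_vec b) (m t b) = 0" using none by (intro lincomb_basis_vec_zero) auto
    ultimately have "1 = cmod (?D (m t b))" by simp
    also have "\<dots> \<le> l2norm ?D"
      by (rule norm_le_l2norm[OF l2_diff(1)[OF approximableD(1)[OF W e(1)] conjunct1[OF lincomb_l2[OF L(1) e(1)]]]])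
    also have "\<dots> \<le> 1/2" using L(2)[OF e(1)] e(2) by simp
    finally show False by simp
  qed
  with L(1) show thesis by (rule that)
qed

lemma zzmap_translation:
  assumes t: "t \<in> Y" and z: "letters_in z" "z \<noteq> []"
    and b: "r b = s t" "zz z b = Some (m t b)" and b': "b' \<in> zzdom r s m \<Lambda> z"
  shows "r b' = s t" "zz z b' = Some (m t b')" "b' \<in> \<Lambda>" "m t b' \<in> \<Lambda>"
proof -
  obtain y' where y': "zz z b' = Some y'" using b' by (auto simp: zzdom_def)
  show tb': "r b' = s t" "zz z b' = Some (m t b')"
    using zzmap_left_mult[OF t z b(2) b(1) y'] y' by simp_all
  show "b' \<in> \<Lambda>" using zzmap_dom_in[OF z(2) y'] .
  obtain a0 b0 z0 where z0: "z = (a0,b0)#z0" using z(2) by (metis list.exhaust prod.exhaust)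
  have "a0 \<in> Y" using z(1) z0 subcat_in_Y by simp
  then show "m t b' \<in> \<Lambda>" using zzmap_Cons_range tb'(2) z0 by blast
qed

definition zigzag_cover :: "'a \<Rightarrow> ('a \<times> 'a) list set \<Rightarrow> bool" where
  "zigzag_cover t F \<longleftrightarrow> finite F \<and> F \<subseteq> zigzags r s \<Lambda> \<and>
     (\<forall>z\<in>F. \<forall>b\<in>zzdom r s m \<Lambda> z. r b = s t \<and> zz z b = Some (m t b)) \<and>
     {b\<in>\<Lambda>. r b = s t \<and> m t b \<in> \<Lambda>} = (\<Union>z\<in>F. zzdom r s m \<Lambda> z)"

lemma zigzag_cover_if_approximable:
  assumes t: "t \<in> Y" and W: "approximable (Wop r m i \<Lambda> t)"
  shows "\<exists>F. zigzag_cover t F"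
proof -
  obtain L where L: "admissible L"
    and reach: "\<And>b. b \<in> \<Lambda> \<Longrightarrow> r b = s t
      \<Longrightarrow> m t b \<in> \<Lambda>
        \<Longrightarrow> \<exists>c z. (c,z) \<in> set L \<and> zz z (m t b) = Some b"
    using approximable_Wop_reaches[OF t W] by blast
  define F where "F = zz_reverse ` {z \<in> snd ` set L. \<exists>b. r b = s t \<and> zz z (m t b) = Some b}"
  have F: "letters_in z" "z \<noteq> []"
    "\<exists>b. r b = s t \<and> zz z b = Some (m t b)" if "z \<in> F" for z
  proof -
    obtain c z' b where z': "z = zz_reverse z'" "(c,z') \<in> set L" "r b = s t" "zz z' (m t b) = Some b"
      using \<open>z \<in> F\<close> unfolding F_def by force
    have "letters_in z'" "z' \<noteq> []" using L z'(2) by (auto simp: admissible_def)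
    moreover have "zz z b = Some (m t b)"
      using z'(1,4) zzmap_reverse_iff[OF \<open>letters_in z'\<close>] by simp
    ultimately show "letters_in z" "z \<noteq> []" "\<exists>b. r b = s t \<and> zz z b = Some (m t b)"
      using z'(1,3) by auto
  qed
  have transl: "r b = s t \<and> zz z b = Some (m t b) \<and> b \<in> \<Lambda> \<and> m t b \<in> \<Lambda>"
    if "z \<in> F" "b \<in> zzdom r s m \<Lambda> z" for z b
    using F(3)[OF that(1)] zzmap_translation[OF t F(1,2)[OF that(1)] _ _ that(2)] by blast
  have "finite F" unfolding F_def by simp
  moreover have "F \<subseteq> zigzags r s \<Lambda>" using F zigzag_if_defined by (meson subsetI)
  moreover have "\<forall>z\<in>F. \<forall>b\<in>zzdom r s m \<Lambda> z. r b = s t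
    \<and> zz z b = Some (m t b)"
    using transl by blast
  moreover have "(\<Union>z\<in>F. zzdom r s m \<Lambda> z) \<subseteq> {b\<in>\<Lambda>. r b = s t \<and> m t b \<in> \<Lambda>}"
    using transl by blast
  moreover have "{b\<in>\<Lambda>. r b = s t \<and> m t b \<in> \<Lambda>} \<subseteq> (\<Union>z\<in>F. zzdom r s m \<Lambda> z)"
  proof
    fix b assume "b \<in> {b\<in>\<Lambda>. r b = s t \<and> m t b \<in> \<Lambda>}"
    then obtain c z where b: "r b = s t" and cz: "(c,z) \<in> set L" "zz z (m t b) = Some b"
      using reach by blast
    moreover have "letters_in z" using L cz(1) by (auto simp: admissible_def)
    ultimately have "zz (zz_reverse z) b = Some (m t b)" using zzmap_reverse_iff by blast
    moreover have "zz_reverse z \<in> F" using b cz unfolding F_def by force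
    ultimately show "b \<in> (\<Union>z\<in>F. zzdom r s m \<Lambda> z)" by (auto simp: zzdom_def)
  qed
  ultimately show ?thesis unfolding zigzag_cover_def by blast
qed

lemma pcomp_tau_in_Wgen: assumes b: "b \<in> \<Lambda>" shows "pcomp (tauL b) \<in> Wgen"
proof -
  have bY: "b \<in> Y" using b subcat_in_Y by auto
  have W: "Wop r m i \<Lambda> b \<in> Wgen" using b by (auto intro: Cstar_gen.gen)
  show ?thesis
  proof (rule Cstar_gen.adj[OF W])
    show "\<forall>g\<in>l2 \<Lambda>. pcomp (tauL b) g \<in> l2 \<Lambda>"
    proof
      fix g assume g: "g \<in> l2 \<Lambda>"
      show "pcomp (tauL b) g \<in> l2 \<Lambda>"
        by (rule pcomp_l2(1)[OF _ _ g]) (auto simp: tau_def subcat_in_Y bY split: if_splits intro: left_cancel[OF bY])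
    qed
    show "\<forall>f\<in>l2 \<Lambda>. \<forall>g\<in>l2 \<Lambda>. l2inner (Wop r m i \<Lambda> b f) g = l2inner f (pcomp (tauL b) g)"
      unfolding Wop_eq_pcomp_sigma[OF b] by (intro ballI pcomp_adjoint) (rule sigma_Some_iff[OF bY])
  qed
qed

lemma zzop_Cons: "zzop ((a,b)#z) f = zzop z (pcomp (tauL b) (pcomp (sigmaL a) f))"
  by (rule ext) (simp add: zzop_def pcomp_def split: option.split)

lemma zzop_Nil: "zzop [] f = f"
  by (rule ext) (simp add: zzop_def pcomp_def)

lemma zzop_in_Wgen: "letters_in z \<Longrightarrow> z \<noteq> [] \<Longrightarrow> zzop z \<in> Wgen"
proof (induction z)
  case Nil then show ?case by simp
next
  case (Cons p z)
  obtain a b where p: "p = (a,b)" by fastforce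
  have ab: "a \<in> \<Lambda>" "b \<in> \<Lambda>" "letters_in z" using Cons.prems p by auto
  have Wa: "pcomp (sigmaL a) \<in> Wgen" using Wop_eq_pcomp_sigma[OF ab(1)] ab(1)
    by (metis Cstar_gen.gen image_eqI)
  have T2: "(\<lambda>f. pcomp (tauL b) (pcomp (sigmaL a) f)) \<in> Wgen"
    by (rule Cstar_gen.mult[OF pcomp_tau_in_Wgen[OF ab(2)] Wa])
  show ?case
  proof (cases "z = []")
    case True
    have "zzop (p#z) = (\<lambda>f. pcomp (tauL b) (pcomp (sigmaL a) f))"
      by (rule ext) (simp add: True p zzop_Cons zzop_Nil)
    then show ?thesis using T2 by simp
  next
    case False
    have "zzop (p#z) = (\<lambda>f. zzop z ((\<lambda>f. pcomp (tauL b) (pcomp (sigmaL a) f)) f))"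
      by (rule ext) (simp add: p zzop_Cons)
    then show ?thesis using Cstar_gen.mult[OF Cons.IH[OF ab(3) False] T2] by simp
  qed
qed

definition Wop_on :: "'a \<Rightarrow> 'a set \<Rightarrow> 'a op" where
  "Wop_on t C f = Wop r m i \<Lambda> t (\<lambda>x. if x \<in> C then f x else 0)"

lemma Wop_eq_Wop_on:
  assumes t: "t \<in> Y" shows "Wop r m i \<Lambda> t = Wop_on t {b\<in>\<Lambda>. r b = s t \<and> m t b \<in> \<Lambda>}"
proof (intro ext)
  fix f g
  show "Wop r m i \<Lambda> t f g = Wop_on t {b\<in>\<Lambda>. r b = s t \<and> m t b \<in> \<Lambda>} f g"
  proof (cases "g \<in> \<Lambda> \<and> r g = r t \<and> m (i t) g \<in> \<Lambda>")
    case True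
    then have gY: "g \<in> Y" using subcat_in_Y by auto
    have "m t (m (i t) g) = g" using mult_inv_cancel[OF t gY] True by simp
    moreover have "r (m (i t) g) = s t"
      using mult_laws(2)[OF arrow_closed(3)[OF t] gY] rs_laws[OF t] True by simp
    ultimately show ?thesis using True by (simp add: Wop_on_def Wop_def)
  qed (auto simp: Wop_on_def Wop_def)
qed

lemma zzop_reverse_eq_Wop_on:
  assumes t: "t \<in> Y" and z: "letters_in z" "z \<noteq> []"
    and transl: "\<forall>b\<in>zzdom r s m \<Lambda> z. r b = s t \<and> zz z b = Some (m t b)"
  shows "zzop (zz_reverse z) = Wop_on t (zzdom r s m \<Lambda> z)"
proof (intro ext)
  fix f g
  show "zzop (zz_reverse z) f g = Wop_on t (zzdom r s m \<Lambda> z) f g"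
  proof (cases "zz (zz_reverse z) g")
    case (Some x)
    have zx: "zz z x = Some g" using Some zzmap_reverse_iff[OF z(1)] by blast
    then have xA: "x \<in> zzdom r s m \<Lambda> z" by (simp add: zzdom_def)
    have h: "r x = s t" "g = m t x" using transl xA zx by auto
    have xL: "x \<in> \<Lambda>" "m t x \<in> \<Lambda>"
      using zzmap_translation[OF t z h(1) _ xA] zx h(2) by simp_all
    have xY: "x \<in> Y" using subcat_in_Y xL(1) .
    have "r g = r t" "m (i t) g = x"
      using h mult_laws(2)[OF t xY] inv_mult_cancel[OF t xY] by simp_all
    then show ?thesis using Some xA xL h by (simp add: zzop_def pcomp_def Wop_on_def Wop_def)
  next
    case None
    have "\<not> (g \<in> \<Lambda> \<and> r g = r t \<and> m (i t) g \<in> zzdom r s m \<Lambda> z)"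
    proof
      assume c: "g \<in> \<Lambda> \<and> r g = r t \<and> m (i t) g \<in> zzdom r s m \<Lambda> z"
      have "zz z (m (i t) g) = Some (m t (m (i t) g))" using transl c by blast
      also have "m t (m (i t) g) = g" using mult_inv_cancel[OF t] c subcat_in_Y by auto
      finally have "zz (zz_reverse z) g = Some (m (i t) g)" using zzmap_reverse_iff[OF z(1)] by blast
      then show False using None by simp
    qed
    then show ?thesis using None by (auto simp: zzop_def pcomp_def Wop_on_def Wop_def)
  qed
qed

lemma zzop_zzop_reverse:
  assumes "letters_in z"
  shows "zzop z (zzop (zz_reverse z) f) x = (if x \<in> zzdom r s m \<Lambda> z then f x else 0)"
proof (cases "zz z x")
  case (Some y)
  then have "zz (zz_reverse z) y = Some x" using zzmap_reverse_iff[OF assms] by blast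
  then show ?thesis using Some by (simp add: zzop_def pcomp_def zzdom_def)
qed (simp add: zzop_def pcomp_def zzdom_def)

lemma Wop_on_empty_in_Wgen:
  assumes "t \<in> Y" shows "Wop_on t {} \<in> Wgen"
proof -
  have "Wop r m i \<Lambda> (r t) \<in> Wgen" using units_in_subcat[OF assms] by (auto intro: Cstar_gen.gen)
  then have "(\<lambda>f x. 0 * Wop r m i \<Lambda> (r t) f x) \<in> Wgen" by (rule Cstar_gen.scale)
  moreover have "(\<lambda>f x. 0 * Wop r m i \<Lambda> (r t) f x) = Wop_on t {}"
    by (intro ext) (simp add: Wop_on_def Wop_def)
  ultimately show ?thesis by simp
qed

text \<open>With V the zigzag operator of z and A its domain, V V^* is the projection onto A and
  V^* = Wop_on t A, so Wop_on t (A \<union> C) = V^* + Wop_on t C - Wop_on t C V V^*.\<close>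

lemma Wop_on_Un_in_Wgen:
  assumes t: "t \<in> Y" and z: "letters_in z" "z \<noteq> []"
    and transl: "\<forall>b\<in>zzdom r s m \<Lambda> z. r b = s t \<and> zz z b = Some (m t b)"
    and C: "Wop_on t C \<in> Wgen"
  shows "Wop_on t (zzdom r s m \<Lambda> z \<union> C) \<in> Wgen"
proof -
  let ?V = "zzop z" and ?V' = "zzop (zz_reverse z)" and ?Q = "Wop_on t C"
  have V: "?V \<in> Wgen" "?V' \<in> Wgen" using zzop_in_Wgen z by simp_all
  have QVV: "(\<lambda>f. ?Q (?V (?V' f))) \<in> Wgen"
    using Cstar_gen.mult[OF C Cstar_gen.mult[OF V]] by simp
  have "(\<lambda>f x. ?V' f x + (?Q f x + (-1) * ?Q (?V (?V' f)) x)) \<in> Wgen"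
    using Cstar_gen.add[OF V(2) Cstar_gen.add[OF C Cstar_gen.scale[OF QVV, of "-1"]]] by simp
  moreover have "(\<lambda>f x. ?V' f x + (?Q f x + (-1) * ?Q (?V (?V' f)) x))
    = Wop_on t (zzdom r s m \<Lambda> z \<union> C)"
  proof (intro ext)
    fix f g
    have "?V (?V' f) = (\<lambda>x. if x \<in> zzdom r s m \<Lambda> z then f x else 0)"
      using zzop_zzop_reverse[OF z(1)] by blast
    then show "?V' f g + (?Q f g + (-1) * ?Q (?V (?V' f)) g)
      = Wop_on t (zzdom r s m \<Lambda> z \<union> C) f g"
      unfolding zzop_reverse_eq_Wop_on[OF t z transl] by (simp add: Wop_on_def Wop_def)
  qed
  ultimately show ?thesis by simp
qed

lemma Wop_in_Wgen_if_zigzag_cover: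
  assumes t: "t \<in> Y" and F: "zigzag_cover t F"
  shows "Wop r m i \<Lambda> t \<in> Wgen"
proof -
  have "Wop_on t (\<Union>z\<in>F'. zzdom r s m \<Lambda> z) \<in> Wgen" if "finite F'"
    "F' \<subseteq> F" for F'
    using that
  proof (induction F' rule: finite_induct)
    case empty
    then show ?case using Wop_on_empty_in_Wgen[OF t] by simp
  next
    case (insert z F')
    then have "z \<in> zigzags r s \<Lambda>"
      "\<forall>b\<in>zzdom r s m \<Lambda> z. r b = s t \<and> zz z b = Some (m t b)"
      using F unfolding zigzag_cover_def by auto
    then show ?case using Wop_on_Un_in_Wgen[OF t] insert zigzagsD by simp
  qed
  then show ?thesis using F Wop_eq_Wop_on[OF t] unfolding zigzag_cover_def by auto
qed

end

theorem mainTheorem18: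
  fixes Y \<Lambda> :: "'a set" and r s i :: "'a \<Rightarrow> 'a" and m :: "'a \<Rightarrow> 'a \<Rightarrow> 'a" and t :: 'a
  assumes "groupoid Y r s m i"
    and "subcategory Y r s m \<Lambda>"
    and "r ` Y \<subseteq> \<Lambda>"
    and "t \<in> Y"
  shows "Wop r m i \<Lambda> t \<in> W0 r m i \<Lambda> \<longleftrightarrow>
    (\<exists>F. finite F \<and> F \<subseteq> zigzags r s \<Lambda> \<and>
       (\<forall>z\<in>F. \<forall>b\<in>zzdom r s m \<Lambda> z. r b = s t \<and> zzmap r s m \<Lambda> z b = Some (m t b)) \<and>
       {b\<in>\<Lambda>. r b = s t \<and> m t b \<in> \<Lambda>} = (\<Union>z\<in>F. zzdom r s m \<Lambda> z))"
proof -
  interpret groupoid_subcategory Y \<Lambda> r s i m using assms(1-3) by unfold_locales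
  have "Wop r m i \<Lambda> t \<in> W0 r m i \<Lambda> \<longleftrightarrow> (\<exists>F. zigzag_cover t F)"
    unfolding W0_def
    using zigzag_cover_if_approximable[OF assms(4) approximable_if_Wgen]
      Wop_in_Wgen_if_zigzag_cover[OF assms(4)] by blast
  then show ?thesis unfolding zigzag_cover_def .
qed

end
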